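(* Under the standing assumptions stated in the context, for every fixed $s\in\mathbb N$, $$\frac{\check Z_\beta^{(n_\beta-s)}(0)}{Z_\beta^{(n_\beta)}}=(\rho_\beta)^s\,\mu_\beta(\mathcal S)[1+o(1)],\qquad\beta\to\infty.$$
   Context: Kawasaki setting. Fix $U>0$ and $\Delta$ with $U<\Delta<2U$ and $U/(2U-\Delta)\notin\mathbb N$; $\ell_c=\lceil U/(2U-\Delta)\rceil$. $\Lambda_\beta\subset\mathbb Z^2$: square box of odd side length centred at the origin with periodic boundary conditions. $\rho_\beta=e^{-\beta\Delta}$, $n_\beta=\lceil\rho_\beta|\Lambda_\beta|\rceil$. Assume $|\Lambda_\beta|\rho_\beta\to\infty$ and $|\Lambda_\beta|e^{-\beta\Gamma}\to0$, where $\Gamma=-U\,b+\Delta[\ell_c(\ell_c-1)+2]$ and $b$ is the number of nearest-neighbour pairs inside a proto-critical droplet (a set of $\ell_c(\ell_c-1)+1$ sites forming either an $(\ell_c-2)\times(\ell_c-2)$ square with four bars on its sides of total length $3\ell_c-3$, or an $(\ell_c-1)\times(\ell_c-3)$ rectangle with four bars of total length $3\ell_c-2$). $\mathcal X_\beta^{(m)}=\{\sigma\in\{0,1\}^{\Lambda_\beta}:|\mathrm{supp}[\sigma]|=m\}$. $H_\beta(\sigma)=-U\sum_{\{x,y\}}\sigma(x)\sigma(y)$ (unordered nearest-neighbour pairs); $Z_\beta^{(n_\beta)}=\sum_{\sigma\in\mathcal X_\beta^{(n_\beta)}}e^{-\beta H_\beta(\sigma)}$; $\mu_\beta=e^{-\beta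 H_\beta}/Z_\beta^{(n_\beta)}$ on $\mathcal X_\beta^{(n_\beta)}$. $L_\beta$ odd with $L_\beta^2=e^{(\Delta-\delta_\beta)\beta}$, $\delta_\beta\to0$, $\beta\delta_\beta\to\infty$; $B_{L,L}(x)$: square box of side $L$ centred at $x$. $\mathcal S^{(m)}=\{\sigma\in\mathcal X_\beta^{(m)}:|\mathrm{supp}[\sigma]\cap B_{L_\beta,L_\beta}(x)|\le\ell_c(\ell_c-1)+1\ \forall x\in\Lambda_\beta\}$, $\mathcal S=\mathcal S^{(n_\beta)}$. For $m\le n_\beta$, $\check Z_\beta^{(m)}(0)=\sum e^{-\beta H_\beta(\eta)}$, the sum over all $\eta\in\mathcal S^{(m)}$ with $\mathrm{supp}[\eta]\subset\Lambda_\beta\setminus B_{L_\beta,L_\beta}(0)$. *)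

theory Defs
  imports "HOL-Analysis.Analysis"
begin

definition torus :: "nat \<Rightarrow> (int \<times> int) set" where
  "torus N = {0..<int N} \<times> {0..<int N}"

definition torus_adj :: "nat \<Rightarrow> int \<times> int \<Rightarrow> int \<times> int \<Rightarrow> bool" where
  "torus_adj N x y \<longleftrightarrow> x \<in> torus N \<and> y \<in> torus N \<and> x \<noteq> y \<and>
     ((fst y = (fst x + 1) mod int N \<and> snd y = snd x) \<or>
      (fst x = (fst y + 1) mod int N \<and> snd x = snd y) \<or>
      (snd y = (snd x + 1) mod int N \<and> fst y = fst x) \<or>
      (snd x = (snd y + 1) mod int N \<and> fst x = fst y))"

definition nn_pairs :: "nat \<Rightarrow> (int \<times> int) set \<Rightarrow> (int \<times> int) set set" where
  "nn_pairs N A = {{x, y} | x y. x \<in> A \<and> y \<in> A \<and> torus_adj N x y}"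

text \<open>A configuration \<sigma> is identified with its support supp[\<sigma>].
  Hamiltonian H(\<sigma>) = -U \<Sum>_{x,y nn} \<sigma>(x)\<sigma>(y).\<close>
definition Ham :: "real \<Rightarrow> nat \<Rightarrow> (int \<times> int) set \<Rightarrow> real" where
  "Ham U N A = - U * real (card (nn_pairs N A))"

definition configs :: "nat \<Rightarrow> nat \<Rightarrow> (int \<times> int) set set" where
  "configs N m = {A. A \<subseteq> torus N \<and> card A = m}"

definition cyc_dist :: "nat \<Rightarrow> int \<Rightarrow> int \<Rightarrow> int" where
  "cyc_dist N a b = min ((a - b) mod int N) ((b - a) mod int N)"

definition box :: "nat \<Rightarrow> nat \<Rightarrow> int \<times> int \<Rightarrow> (int \<times> int) set" where
  "box N L x = {y \<in> torus N. cyc_dist N (fst y) (fst x) \<le> (int L - 1) div 2 \<and>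
                              cyc_dist N (snd y) (snd x) \<le> (int L - 1) div 2}"

definition lc :: "real \<Rightarrow> real \<Rightarrow> nat" where
  "lc U \<Delta> = nat \<lceil>U / (2 * U - \<Delta>)\<rceil>"

text \<open>Number of nearest-neighbour pairs in a proto-critical droplet:
  b = 2(\<ell>_c - 1)^2 (both shapes have \<ell>_c(\<ell>_c-1)+1 sites and an \<ell>_c x \<ell>_c,
  resp. (\<ell>_c+1) x (\<ell>_c-1), bounding box, hence perimeter 4\<ell>_c).\<close>
definition proto_b :: "real \<Rightarrow> real \<Rightarrow> nat" where
  "proto_b U \<Delta> = 2 * (lc U \<Delta> - 1)^2"

definition Gamma_crit :: "real \<Rightarrow> real \<Rightarrow> real" where
  "Gamma_crit U \<Delta> = - U * real (proto_b U \<Delta>)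
      + \<Delta> * real (lc U \<Delta> * (lc U \<Delta> - 1) + 2)"

definition Sset :: "real \<Rightarrow> real \<Rightarrow> nat \<Rightarrow> nat \<Rightarrow> nat \<Rightarrow> (int \<times> int) set set" where
  "Sset U \<Delta> N L m = {A \<in> configs N m. \<forall>x \<in> torus N.
      card (A \<inter> box N L x) \<le> lc U \<Delta> * (lc U \<Delta> - 1) + 1}"

definition Zcan :: "real \<Rightarrow> nat \<Rightarrow> real \<Rightarrow> nat \<Rightarrow> real" where
  "Zcan U N \<beta> m = (\<Sum>A \<in> configs N m. exp (- \<beta> * Ham U N A))"

definition mu_can :: "real \<Rightarrow> nat \<Rightarrow> real \<Rightarrow> nat \<Rightarrow> (int \<times> int) set set \<Rightarrow> real" where
  "mu_can U N \<beta> n E = (\<Sum>A \<in> E \<inter> configs N n. exp (- \<beta> * Ham U N A)) / Zcan U N \<beta> n"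

definition Zcheck :: "real \<Rightarrow> real \<Rightarrow> nat \<Rightarrow> nat \<Rightarrow> real \<Rightarrow> nat \<Rightarrow> real" where
  "Zcheck U \<Delta> N L \<beta> m =
     (\<Sum>A \<in> {A \<in> Sset U \<Delta> N L m. A \<subseteq> torus N - box N L (0, 0)}.
        exp (- \<beta> * Ham U N A))"

definition n_part :: "real \<Rightarrow> nat \<Rightarrow> real \<Rightarrow> nat" where
  "n_part \<Delta> N \<beta> = nat \<lceil>exp (- \<beta> * \<Delta>) * real (card (torus N))\<rceil>"

end

theory Submission
  imports Defs
begin

(* Write ZS(m) for the partition function restricted to the set S^(m) of configurations
   with m particles and at most l_c(l_c - 1) + 1 particles in every L x L box, and
   rho = exp(-beta Delta).  The theorem says Zcheck(n - s) ~ rho^s ZS(n), since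
   mu(S) = ZS(n) / Z(n).
      The same decomposition shows that the configurations meeting the box B_L(0) carry
      a fraction O(rho L^2) of ZS, so Zcheck(m) ~ ZS(m).
   3. An abstract analytic lemma: such recursions with n ~ rho N^2 -> infinity and
      vanishing error terms force W(n - s) ~ rho^s W(n) (one-step ratios tend to 1).
   4. The hypotheses of the theorem put us eventually in the dilute regime
      (rho L^2 = exp(-beta delta) -> 0), and the theorem follows. *)

lemma cyc_dist_sym: "cyc_dist N a b = cyc_dist N b a"
  unfolding cyc_dist_def by (simp add: min.commute)

lemma cyc_dist_nonneg: "N > 0 \<Longrightarrow> cyc_dist N a b \<ge> 0"
  unfolding cyc_dist_def by simp

lemma cyc_dist_self: "cyc_dist N a a = 0"
  unfolding cyc_dist_def by simp

lemma cyc_dist_le_shift: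
  assumes "N > 0" shows "cyc_dist N a b \<le> \<bar>a - b - q * int N\<bar>"
proof (cases "a - b - q * int N \<ge> 0")
  case True
  have "a - b - q * int N = (a - b) + (- q) * int N" by simp
  then have "(a - b) mod int N = (a - b - q * int N) mod int N" by (simp only: mod_mult_self1)
  also have "\<dots> \<le> a - b - q * int N" using True by (rule zmod_le_nonneg_dividend)
  finally show ?thesis using True unfolding cyc_dist_def by linarith
next
  case False
  have "b - a + q * int N = (b - a) + q * int N" by simp
  then have "(b - a) mod int N = (b - a + q * int N) mod int N" by (simp only: mod_mult_self1)
  also have "\<dots> \<le> b - a + q * int N" using False by (intro zmod_le_nonneg_dividend) linarith
  finally show ?thesis using False unfolding cyc_dist_def by linarith
qed

lemma cyc_dist_attained:
  assumes "N > 0" shows "\<exists>q. cyc_dist N a b = \<bar>a - b - q * int N\<bar>"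
proof (cases "(a - b) mod int N \<le> (b - a) mod int N")
  case True
  have "a - b - ((a - b) div int N) * int N = (a - b) mod int N" by (rule minus_div_mult_eq_mod)
  then have "cyc_dist N a b = \<bar>a - b - ((a - b) div int N) * int N\<bar>"
    using True assms unfolding cyc_dist_def by simp
  then show ?thesis ..
next
  case False
  have "a - b - (- ((b - a) div int N)) * int N = - ((b - a) - (b - a) div int N * int N)"
    by (simp add: algebra_simps)
  also have "\<dots> = - ((b - a) mod int N)" by (simp only: minus_div_mult_eq_mod)
  finally have "cyc_dist N a b = \<bar>a - b - (- ((b - a) div int N)) * int N\<bar>"
    using False assms unfolding cyc_dist_def by simp
  then show ?thesis ..
qed

text \<open>Triangle inequality, from the representation as a minimum.\<close>

lemma cyc_dist_triangle:
  assumes "N > 0" shows "cyc_dist N a c \<le> cyc_dist N a b + cyc_dist N b c"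
proof -
  obtain q1 where q1: "cyc_dist N a b = \<bar>a - b - q1 * int N\<bar>" using cyc_dist_attained[OF assms] ..
  obtain q2 where q2: "cyc_dist N b c = \<bar>b - c - q2 * int N\<bar>" using cyc_dist_attained[OF assms] ..
  have "cyc_dist N a c \<le> \<bar>(a - b - q1 * int N) + (b - c - q2 * int N)\<bar>"
    using cyc_dist_le_shift[OF assms, of a c "q1 + q2"] by (simp add: algebra_simps)
  also have "\<dots> \<le> \<bar>a - b - q1 * int N\<bar> + \<bar>b - c - q2 * int N\<bar>" by (rule abs_triangle_ineq)
  finally show ?thesis using q1 q2 by simp
qed

lemma cyc_dist_eq_0:
  assumes "N > 0" "a \<in> {0..<int N}" "b \<in> {0..<int N}" "cyc_dist N a b = 0"
  shows "a = b"
proof -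
  obtain q where "\<bar>a - b - q * int N\<bar> = 0" using cyc_dist_attained[OF assms(1), of a b] assms(4) by auto
  then have "a - b = q * int N" by simp
  moreover have "\<bar>a - b\<bar> < int N" using assms(2,3) by auto
  ultimately have "q = 0" using assms(1) by (auto simp: abs_mult mult_less_cancel_right1)
  then show ?thesis using \<open>a - b = q * int N\<close> by simp
qed

lemma cyc_dist_succ:
  assumes "N > 0" shows "cyc_dist N a ((a + 1) mod int N) \<le> 1"
proof -
  have "cyc_dist N ((a + 1) mod int N) a
      \<le> \<bar>(a + 1) mod int N - a - (- ((a + 1) div int N)) * int N\<bar>"
    by (rule cyc_dist_le_shift[OF assms])
  also have "(a + 1) mod int N - a - (- ((a + 1) div int N)) * int N = 1"
    using minus_div_mult_eq_mod[of "a + 1" "int N"] by linarith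
  finally show ?thesis by (simp add: cyc_dist_sym)
qed

lemma card_cyc_ball:
  assumes "N > 0" "R \<ge> 0"
  shows "card {t \<in> {0..<int N}. cyc_dist N a t \<le> R} \<le> nat (2 * R + 1)"
proof -
  have cover: "{t \<in> {0..<int N}. cyc_dist N a t \<le> R} \<subseteq> (\<lambda>i. (a + i) mod int N) ` {-R..R}"
  proof
    fix t assume t: "t \<in> {t \<in> {0..<int N}. cyc_dist N a t \<le> R}"
    obtain q where q: "cyc_dist N t a = \<bar>t - a - q * int N\<bar>" using cyc_dist_attained[OF assms(1)] ..
    have "a + (t - a - q * int N) = t + (- q) * int N" by simp
    then have "(a + (t - a - q * int N)) mod int N = t" using t by (simp only: mod_mult_self1) simp
    moreover have "t - a - q * int N \<in> {-R..R}" using q t cyc_dist_sym[of N a t] by auto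
    ultimately show "t \<in> (\<lambda>i. (a + i) mod int N) ` {-R..R}" by (metis imageI)
  qed
  have "card {t \<in> {0..<int N}. cyc_dist N a t \<le> R} \<le> card ((\<lambda>i. (a + i) mod int N) ` {-R..R})"
    by (rule card_mono[OF _ cover]) simp
  also have "\<dots> \<le> card {-R..R}" by (rule card_image_le) simp
  finally show ?thesis by simp
qed

definition tdist :: "nat \<Rightarrow> int \<times> int \<Rightarrow> int \<times> int \<Rightarrow> int" where
  "tdist N x y = max (cyc_dist N (fst x) (fst y)) (cyc_dist N (snd x) (snd y))"

definition tball :: "nat \<Rightarrow> int \<Rightarrow> int \<times> int \<Rightarrow> (int \<times> int) set" where
  "tball N R x = {y \<in> torus N. tdist N x y \<le> R}"

lemma tdist_sym: "tdist N x y = tdist N y x"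
  unfolding tdist_def by (simp add: cyc_dist_sym)

lemma tdist_self: "tdist N x x = 0"
  unfolding tdist_def by (simp add: cyc_dist_self)

lemma tdist_nonneg: "N > 0 \<Longrightarrow> tdist N x y \<ge> 0"
  unfolding tdist_def using cyc_dist_nonneg by (simp add: le_max_iff_disj)

lemma tdist_triangle: "N > 0 \<Longrightarrow> tdist N x z \<le> tdist N x y + tdist N y z"
  unfolding tdist_def using cyc_dist_triangle[of N "fst x" "fst z" "fst y"]
    cyc_dist_triangle[of N "snd x" "snd z" "snd y"] by (simp add: max_def)

lemma tdist_eq_0:
  assumes "N > 0" "x \<in> torus N" "y \<in> torus N" "tdist N x y = 0" shows "x = y"
proof -
  have "cyc_dist N (fst x) (fst y) = 0" "cyc_dist N (snd x) (snd y) = 0"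
    using assms(4) cyc_dist_nonneg[OF assms(1)] unfolding tdist_def by (smt (verit))+
  then show ?thesis
    using cyc_dist_eq_0[OF assms(1)] assms(2,3) unfolding torus_def by (auto simp: prod_eq_iff)
qed

lemma tdist_adj:
  assumes N: "N > 0" and adj: "torus_adj N x y" shows "tdist N x y \<le> 1"
proof -
  have succ: "\<And>u v. v = (u + 1) mod int N \<Longrightarrow> cyc_dist N u v \<le> 1 \<and> cyc_dist N v u \<le> 1"
    using cyc_dist_succ[OF N] cyc_dist_sym by metis
  from adj show ?thesis
    unfolding torus_adj_def tdist_def
    using succ[of "fst x" "fst y"] succ[of "fst y" "fst x"] succ[of "snd x" "snd y"]
      succ[of "snd y" "snd x"] by (auto simp: cyc_dist_self)
qed

lemma finite_torus: "finite (torus N)"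
  unfolding torus_def by simp

lemma card_torus: "card (torus N) = N * N"
  unfolding torus_def by (simp add: card_cartesian_product)

lemma tball_subset_torus: "tball N R x \<subseteq> torus N"
  unfolding tball_def by auto

lemma finite_tball: "finite (tball N R x)"
  using finite_subset[OF tball_subset_torus finite_torus] .

lemma card_tball:
  assumes "N > 0" "R \<ge> 0"
  shows "card (tball N R x) \<le> nat (2 * R + 1) ^ 2"
proof -
  let ?I = "\<lambda>a. {t \<in> {0..<int N}. cyc_dist N a t \<le> R}"
  have "tball N R x \<subseteq> ?I (fst x) \<times> ?I (snd x)"
    unfolding tball_def torus_def tdist_def by auto
  then have "card (tball N R x) \<le> card (?I (fst x) \<times> ?I (snd x))"
    by (rule card_mono[rotated]) (intro finite_cartesian_product; rule finite_subset[of _ "{0..<int N}"]; auto)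
  also have "\<dots> \<le> nat (2 * R + 1) * nat (2 * R + 1)"
    unfolding card_cartesian_product by (intro mult_le_mono card_cyc_ball assms)
  finally show ?thesis by (simp add: power2_eq_square)
qed

lemma box_eq_tball: "box N L x = tball N ((int L - 1) div 2) x"
  unfolding box_def tball_def tdist_def by (auto simp: cyc_dist_sym)

lemma card_box:
  assumes "N > 0" "odd L" shows "card (box N L x) \<le> L ^ 2"
proof -
  have "even (int L - 1)" using assms(2) by simp
  then have "2 * ((int L - 1) div 2) + 1 = int L" by simp
  moreover have "card (box N L x) \<le> nat (2 * ((int L - 1) div 2) + 1) ^ 2"
    unfolding box_eq_tball by (rule card_tball) (use assms in \<open>simp_all add: odd_pos\<close>)
  ultimately show ?thesis by simp
qed

lemma box_within_tball:
  assumes "N > 0" "odd L" "y \<in> box N L z" "a \<in> box N L z"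
  shows "y \<in> tball N (int L - 1) a"
proof -
  have "even (int L - 1)" using assms(2) by simp
  then have "2 * ((int L - 1) div 2) = int L - 1" by simp
  moreover have "tdist N a y \<le> tdist N a z + tdist N z y" by (rule tdist_triangle[OF assms(1)])
  moreover have "tdist N a z \<le> (int L - 1) div 2" "tdist N z y \<le> (int L - 1) div 2"
    using assms(3,4) unfolding box_eq_tball tball_def by (auto simp: tdist_sym)
  ultimately show ?thesis using assms(3) unfolding box_eq_tball tball_def by auto
qed

subsection \<open>Isoperimetry of clusters that do not wrap around the torus\<close>

lemma cyclic_closed_full:
  assumes a: "a \<in> S" and S: "S \<subseteq> {0..<int N}" and closed: "\<forall>t\<in>S. (t + 1) mod int N \<in> S"
  shows "S = {0..<int N}"
proof
  have orbit: "(a + int i) mod int N \<in> S" for i :: nat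
  proof (induction i)
    case 0 then show ?case using a S by auto
  next
    case (Suc i)
    have "((a + int i) mod int N + 1) mod int N \<in> S" using closed Suc by blast
    moreover have "((a + int i) mod int N + 1) mod int N = (a + int (Suc i)) mod int N"
      by (metis mod_add_left_eq of_nat_Suc add.assoc add.commute)
    ultimately show ?case by simp
  qed
  show "{0..<int N} \<subseteq> S"
  proof
    fix t :: int assume t: "t \<in> {0..<int N}"
    then have "int (nat ((t - a) mod int N)) = (t - a) mod int N" by simp
    then have "(a + int (nat ((t - a) mod int N))) mod int N = (a + (t - a)) mod int N"
      by (simp add: mod_add_right_eq)
    then show "t \<in> S" using orbit[of "nat ((t - a) mod int N)"] t by simp
  qed
qed (fact S)

lemma card_ge_if_line_closed:
  assumes "finite C" "inj line" "line a \<in> C"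
    and closed: "\<forall>t. line t \<in> C \<longrightarrow> t \<in> {0..<int N} \<and> line ((t + 1) mod int N) \<in> C"
  shows "N \<le> card C"
proof -
  have "{t. line t \<in> C} = {0..<int N}"
    by (rule cyclic_closed_full[of a]) (use assms in auto)
  then have "line ` {0..<int N} \<subseteq> C" by auto
  then have "card (line ` {0..<int N}) \<le> card C" by (rule card_mono[OF assms(1)])
  then show ?thesis using card_image[OF inj_on_subset[OF assms(2) subset_UNIV]] by simp
qed

lemma card_shift_plus_fibres:
  assumes fin: "finite C" and exit: "\<And>x. x \<in> C \<Longrightarrow> \<exists>y\<in>C. \<pi> y = \<pi> x \<and> \<sigma> y \<notin> C"
  shows "card {x\<in>C. \<sigma> x \<in> C} + card (\<pi> ` C) \<le> card C"
proof -
  let ?K = "{x\<in>C. \<sigma> x \<in> C}"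
  have "\<pi> ` C \<subseteq> \<pi> ` (C - ?K)"
  proof
    fix v assume "v \<in> \<pi> ` C"
    then obtain x where x: "x \<in> C" "v = \<pi> x" by auto
    then obtain y where "y \<in> C" "\<pi> y = \<pi> x" "\<sigma> y \<notin> C" using exit by blast
    then show "v \<in> \<pi> ` (C - ?K)" using x(2) by (intro image_eqI[of v \<pi> y]) auto
  qed
  then have "card (\<pi> ` C) \<le> card (C - ?K)"
    using card_mono[OF finite_imageI] card_image_le fin by (meson finite_Diff order_trans)
  also have "\<dots> = card C - card ?K" by (rule card_Diff_subset) (use fin in auto)
  finally show ?thesis using card_mono[OF fin, of ?K] by auto
qed

definition hshift :: "nat \<Rightarrow> int \<times> int \<Rightarrow> int \<times> int" where
  "hshift N x = ((fst x + 1) mod int N, snd x)"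

definition vshift :: "nat \<Rightarrow> int \<times> int \<Rightarrow> int \<times> int" where
  "vshift N x = (fst x, (snd x + 1) mod int N)"

text \<open>A cluster with fewer than \<open>N\<close> sites meets no row in a full circle, so every row
  (and every column) contains a site whose right (upper) neighbour is empty.\<close>

lemma row_exit:
  assumes C: "C \<subseteq> torus N" "card C < N" and x: "x \<in> C"
  shows "\<exists>y\<in>C. snd y = snd x \<and> hshift N y \<notin> C"
proof (rule ccontr)
  assume "\<not> ?thesis"
  then have closed: "\<forall>y\<in>C. snd y = snd x \<longrightarrow> hshift N y \<in> C" by blast
  have "\<forall>t. (t, snd x) \<in> C \<longrightarrow> t \<in> {0..<int N} \<and> ((t + 1) mod int N, snd x) \<in> C"
  proof (intro allI impI conjI)
    fix t assume t: "(t, snd x) \<in> C"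
    then show "t \<in> {0..<int N}" using C(1) unfolding torus_def by auto
    show "((t + 1) mod int N, snd x) \<in> C" using closed t unfolding hshift_def by force
  qed
  moreover have "inj (\<lambda>t. (t, snd x))" by (simp add: inj_def)
  moreover have "finite C" using C(1) finite_subset finite_torus by blast
  ultimately have "N \<le> card C" using x by (intro card_ge_if_line_closed[of C _ "fst x"]) simp_all
  then show False using C(2) by simp
qed

lemma column_exit:
  assumes C: "C \<subseteq> torus N" "card C < N" and x: "x \<in> C"
  shows "\<exists>y\<in>C. fst y = fst x \<and> vshift N y \<notin> C"
proof (rule ccontr)
  assume "\<not> ?thesis"
  then have closed: "\<forall>y\<in>C. fst y = fst x \<longrightarrow> vshift N y \<in> C" by blast
  have "\<forall>t. (fst x, t) \<in> C \<longrightarrow> t \<in> {0..<int N} \<and> (fst x, (t + 1) mod int N) \<in> C"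
  proof (intro allI impI conjI)
    fix t assume t: "(fst x, t) \<in> C"
    then show "t \<in> {0..<int N}" using C(1) unfolding torus_def by auto
    show "(fst x, (t + 1) mod int N) \<in> C" using closed t unfolding vshift_def by force
  qed
  moreover have "inj (\<lambda>t. (fst x, t))" by (simp add: inj_def)
  moreover have "finite C" using C(1) finite_subset finite_torus by blast
  ultimately have "N \<le> card C" using x by (intro card_ge_if_line_closed[of C _ "snd x"]) simp_all
  then show False using C(2) by simp
qed

lemma nn_pairs_subset_bonds:
  "nn_pairs N C \<subseteq> (\<lambda>x. {x, hshift N x}) ` {x\<in>C. hshift N x \<in> C}
                  \<union> (\<lambda>x. {x, vshift N x}) ` {x\<in>C. vshift N x \<in> C}"
proof
  fix p assume "p \<in> nn_pairs N C"
  then obtain x y where p: "p = {x, y}" "x \<in> C" "y \<in> C" "torus_adj N x y"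
    unfolding nn_pairs_def by blast
  then have "y = hshift N x \<or> x = hshift N y \<or> y = vshift N x \<or> x = vshift N y"
    unfolding torus_adj_def hshift_def vshift_def by (auto simp: prod_eq_iff)
  then show "p \<in> (\<lambda>x. {x, hshift N x}) ` {x\<in>C. hshift N x \<in> C}
                  \<union> (\<lambda>x. {x, vshift N x}) ` {x\<in>C. vshift N x \<in> C}"
    using p by (auto simp: insert_commute)
qed

lemma bonds_rows_columns_le:
  assumes C: "C \<subseteq> torus N" "card C < N"
  shows "card (nn_pairs N C) + card (fst ` C) + card (snd ` C) \<le> 2 * card C"
proof -
  have fC: "finite C" using C(1) finite_subset finite_torus by blast
  let ?H = "{x\<in>C. hshift N x \<in> C}" and ?V = "{x\<in>C. vshift N x \<in> C}"
  have "card (nn_pairs N C) \<le> card ((\<lambda>x. {x, hshift N x}) ` ?H \<union> (\<lambda>x. {x, vshift N x}) ` ?V)"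
    by (rule card_mono[OF _ nn_pairs_subset_bonds]) (use fC in simp)
  also have "\<dots> \<le> card ?H + card ?V"
    by (rule order_trans[OF card_Un_le add_mono[OF card_image_le card_image_le]]) (use fC in simp_all)
  moreover have "card ?H + card (snd ` C) \<le> card C"
    by (rule card_shift_plus_fibres[OF fC]) (rule row_exit[OF C])
  moreover have "card ?V + card (fst ` C) \<le> card C"
    by (rule card_shift_plus_fibres[OF fC]) (rule column_exit[OF C])
  ultimately show ?thesis by linarith
qed

subsection \<open>The energy of a subcritical cluster\<close>

definition kmax :: "real \<Rightarrow> real \<Rightarrow> nat" where
  "kmax U \<Delta> = lc U \<Delta> * (lc U \<Delta> - 1) + 1"

text \<open>Energy gain per particle of the optimal subcritical shapes, relative to \<open>\<Delta>\<close>.\<close>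

definition eta :: "real \<Rightarrow> real \<Rightarrow> real" where
  "eta U \<Delta> = \<Delta> - 2 * U + U / real (lc U \<Delta> - 1)"

lemma lc_ge_2_and_eta_pos:
  assumes "U > 0" "U < \<Delta>" "\<Delta> < 2 * U"
  shows "lc U \<Delta> \<ge> 2" "eta U \<Delta> > 0"
proof -
  define q where "q = U / (2 * U - \<Delta>)"
  have d: "2 * U - \<Delta> > 0" using assms by simp
  have "q > 1" unfolding q_def using assms d by (simp add: field_simps)
  then have c: "ceiling q \<ge> 2" by (simp add: le_ceiling_iff)
  then show l2: "lc U \<Delta> \<ge> 2" unfolding lc_def q_def[symmetric] by linarith
  have "real (lc U \<Delta>) = real_of_int (ceiling q)" unfolding lc_def q_def[symmetric] using c by simp
  then have "real (lc U \<Delta> - 1) < q" using ceiling_correct[of q] l2 by (simp add: of_nat_diff)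
  then have "real (lc U \<Delta> - 1) * (2 * U - \<Delta>) < U" unfolding q_def using d by (simp add: field_simps)
  then have "2 * U - \<Delta> < U / real (lc U \<Delta> - 1)" using l2 by (simp add: field_simps)
  then show "eta U \<Delta> > 0" unfolding eta_def by simp
qed

lemma grid_count_bound:
  fixes a b j l :: nat
  assumes "l \<ge> 2" "j \<le> (a + 1) * (b + 1)" "j \<le> l * (l - 1) + 1"
  shows "j - 1 \<le> (a + b) * (l - 1)"
proof (cases "a + b \<ge> l")
  case True
  then have "l * (l - 1) \<le> (a + b) * (l - 1)" by (rule mult_right_mono) simp
  then show ?thesis using assms(3) by linarith
next
  case False
  have "a * b \<le> (a + b) * (l - 2)"
  proof (cases "a = 0")
    case False
    then have "a * b \<le> a * (l - 2)" using \<open>\<not> a + b \<ge> l\<close> by simp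
    also have "\<dots> \<le> (a + b) * (l - 2)" by (simp add: mult_right_mono)
    finally show ?thesis .
  qed simp
  moreover have "(a + 1) * (b + 1) = a * b + a + b + 1" by (simp add: algebra_simps)
  moreover have "l - 1 = Suc (l - 2)" using assms(1) by simp
  then have "(a + b) * (l - 1) = (a + b) * (l - 2) + (a + b)" by simp
  ultimately show ?thesis using assms(2) by linarith
qed

lemma bonds_bound:
  assumes l2: "lc U \<Delta> \<ge> 2" and C: "C \<subseteq> torus N" "card C < N" "C \<noteq> {}"
    and small: "card C \<le> kmax U \<Delta>"
  shows "card (nn_pairs N C) * (lc U \<Delta> - 1) + (card C - 1) \<le> 2 * (card C - 1) * (lc U \<Delta> - 1)"
proof -
  define l j c r b where "l = lc U \<Delta>" and "j = card C" and "c = card (fst ` C)"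
    and "r = card (snd ` C)" and "b = card (nn_pairs N C)"
  define p where "p = (c - 1) + (r - 1)"
  have fC: "finite C" using C(1) finite_subset finite_torus by blast
  have c1: "c \<ge> 1" and r1: "r \<ge> 1" and j1: "j \<ge> 1"
    using fC C(3) unfolding c_def r_def j_def by (auto simp: Suc_le_eq)
  have iso: "b + c + r \<le> 2 * j"
    using bonds_rows_columns_le[OF C(1,2)] unfolding b_def c_def r_def j_def by simp
  have "C \<subseteq> fst ` C \<times> snd ` C" by force
  then have "j \<le> c * r" unfolding j_def c_def r_def card_cartesian_product[symmetric]
    by (rule card_mono[rotated]) (use fC in simp)
  then have grid: "j - 1 \<le> p * (l - 1)"
    using grid_count_bound[OF l2[folded l_def], of j "c - 1" "r - 1"] small c1 r1
    unfolding kmax_def l_def j_def p_def by simp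
  have "b + p \<le> 2 * (j - 1)" using iso c1 r1 j1 unfolding p_def by linarith
  then have "(b + p) * (l - 1) \<le> 2 * (j - 1) * (l - 1)" by (rule mult_right_mono) simp
  then have "b * (l - 1) + p * (l - 1) \<le> 2 * (j - 1) * (l - 1)" by (simp only: add_mult_distrib)
  then show ?thesis using grid unfolding l_def j_def b_def by linarith
qed

lemma cluster_energy_bound:
  assumes U: "U > 0" "U < \<Delta>" "\<Delta> < 2 * U"
    and C: "C \<subseteq> torus N" "card C < N" and j2: "2 \<le> card C" and small: "card C \<le> kmax U \<Delta>"
  shows "U * real (card (nn_pairs N C)) \<le> real (card C - 1) * \<Delta> - eta U \<Delta>"
proof -
  define l j b where "l = real (lc U \<Delta> - 1)" and "j = real (card C - 1)"
    and "b = real (card (nn_pairs N C))"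
  have l2: "lc U \<Delta> \<ge> 2" and eta: "eta U \<Delta> > 0" using lc_ge_2_and_eta_pos[OF U] by auto
  have lpos: "l > 0" and j1: "j \<ge> 1" using l2 j2 unfolding l_def j_def by auto
  have "C \<noteq> {}" using j2 by auto
  from of_nat_mono[OF bonds_bound[OF l2 C this small], where 'a=real]
  have "b * l + j \<le> 2 * j * l"
    unfolding l_def j_def b_def of_nat_add of_nat_mult of_nat_numeral .
  then have "b \<le> j * (2 - 1 / l)" using lpos by (simp add: field_simps)
  then have "U * b \<le> U * (j * (2 - 1 / l))" using U(1) by (intro mult_left_mono) simp_all
  also have "\<dots> = j * (2 * U - U / l)" by (simp add: algebra_simps)
  also have "\<dots> = j * \<Delta> - j * eta U \<Delta>" unfolding eta_def l_def by (simp add: algebra_simps)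
  also have "\<dots> \<le> j * \<Delta> - eta U \<Delta>" using j1 eta by (simp add: mult_le_cancel_right1)
  finally show ?thesis unfolding j_def b_def .
qed

definition weight :: "real \<Rightarrow> nat \<Rightarrow> real \<Rightarrow> (int \<times> int) set \<Rightarrow> real" where
  "weight U N \<beta> A = exp (- \<beta> * Ham U N A)"

definition ZS :: "real \<Rightarrow> real \<Rightarrow> nat \<Rightarrow> nat \<Rightarrow> real \<Rightarrow> nat \<Rightarrow> real" where
  "ZS U \<Delta> N L \<beta> m = (\<Sum>A\<in>Sset U \<Delta> N L m. weight U N \<beta> A)"

lemma weight_eq: "weight U N \<beta> A = exp (\<beta> * U * real (card (nn_pairs N A)))"
  unfolding weight_def Ham_def by simp

lemma weight_pos: "weight U N \<beta> A > 0"
  unfolding weight_def by simp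

lemma weight_nonneg: "weight U N \<beta> A \<ge> 0"
  using weight_pos less_imp_le by blast

lemma nn_pairs_subset_Pow: "nn_pairs N A \<subseteq> Pow A"
  unfolding nn_pairs_def by auto

lemma finite_nn_pairs: "finite A \<Longrightarrow> finite (nn_pairs N A)"
  using nn_pairs_subset_Pow finite_subset by blast

lemma nn_pairs_mono: "B \<subseteq> A \<Longrightarrow> nn_pairs N B \<subseteq> nn_pairs N A"
  unfolding nn_pairs_def by blast

text \<open>Adding particles never increases the energy (the interaction is attractive).\<close>

lemma weight_mono:
  assumes "B \<subseteq> A" "finite A" "\<beta> \<ge> 0" "U \<ge> 0"
  shows "weight U N \<beta> B \<le> weight U N \<beta> A"
proof -
  have "card (nn_pairs N B) \<le> card (nn_pairs N A)"
    by (rule card_mono[OF finite_nn_pairs[OF assms(2)] nn_pairs_mono[OF assms(1)]])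
  then have "\<beta> * U * real (card (nn_pairs N B)) \<le> \<beta> * U * real (card (nn_pairs N A))"
    using assms(3,4) by (intro mult_left_mono) auto
  then show ?thesis unfolding weight_eq by simp
qed

lemma weight_split:
  assumes "C \<subseteq> A" "finite A" and no_bond: "\<forall>y\<in>C. \<forall>z\<in>A - C. \<not> torus_adj N y z"
  shows "weight U N \<beta> A = exp (\<beta> * U * real (card (nn_pairs N C))) * weight U N \<beta> (A - C)"
proof -
  have adj_sym: "torus_adj N x y \<Longrightarrow> torus_adj N y x" for x y
    unfolding torus_adj_def by auto
  have un: "nn_pairs N A = nn_pairs N C \<union> nn_pairs N (A - C)"
  proof
    show "nn_pairs N A \<subseteq> nn_pairs N C \<union> nn_pairs N (A - C)"
    proof
      fix p assume "p \<in> nn_pairs N A"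
      then obtain x y where p: "p = {x, y}" "x \<in> A" "y \<in> A" "torus_adj N x y"
        unfolding nn_pairs_def by blast
      then have "(x \<in> C \<and> y \<in> C) \<or> (x \<in> A - C \<and> y \<in> A - C)"
        using no_bond adj_sym by blast
      then show "p \<in> nn_pairs N C \<union> nn_pairs N (A - C)" unfolding nn_pairs_def using p by blast
    qed
    show "nn_pairs N C \<union> nn_pairs N (A - C) \<subseteq> nn_pairs N A"
      using nn_pairs_mono[of C A N] nn_pairs_mono[of "A - C" A N] assms(1) by blast
  qed
  have "nn_pairs N C \<inter> nn_pairs N (A - C) = {}"
    using nn_pairs_subset_Pow[of N C] nn_pairs_subset_Pow[of N "A - C"] unfolding nn_pairs_def by blast
  moreover have "finite C" using assms(1,2) finite_subset by blast
  ultimately have "card (nn_pairs N A) = card (nn_pairs N C) + card (nn_pairs N (A - C))"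
    unfolding un using assms(2) by (intro card_Un_disjoint finite_nn_pairs) auto
  then show ?thesis unfolding weight_eq by (simp add: algebra_simps exp_add[symmetric])
qed

lemma finite_configs: "finite (configs N m)"
  unfolding configs_def by (rule finite_subset[of _ "Pow (torus N)"]) (auto simp: finite_torus)

lemma finite_Sset: "finite (Sset U \<Delta> N L m)"
  unfolding Sset_def using finite_configs by simp

lemma Sset_iff: "A \<in> Sset U \<Delta> N L m \<longleftrightarrow> A \<subseteq> torus N \<and> card A = m \<and>
   (\<forall>x\<in>torus N. card (A \<inter> box N L x) \<le> kmax U \<Delta>)"
  unfolding Sset_def configs_def kmax_def by auto

lemma finite_Sset_member: "A \<in> Sset U \<Delta> N L m \<Longrightarrow> finite A"
  unfolding Sset_iff using finite_subset finite_torus by blast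

lemma Sset_subset:
  assumes "A \<in> Sset U \<Delta> N L m" "B \<subseteq> A"
  shows "B \<in> Sset U \<Delta> N L (card B)"
  unfolding Sset_iff
proof (intro conjI ballI)
  show "B \<subseteq> torus N" using assms unfolding Sset_iff by blast
  fix x assume x: "x \<in> torus N"
  have "card (B \<inter> box N L x) \<le> card (A \<inter> box N L x)"
    by (rule card_mono) (use finite_Sset_member[OF assms(1)] assms(2) in auto)
  also have "\<dots> \<le> kmax U \<Delta>" using assms(1) x unfolding Sset_iff by blast
  finally show "card (B \<inter> box N L x) \<le> kmax U \<Delta>" .
qed simp

lemma Sset_remove:
  assumes A: "A \<in> Sset U \<Delta> N L m" and B: "B \<subseteq> A"
  shows "A - B \<in> Sset U \<Delta> N L (m - card B)"
proof -
  have fA: "finite A" by (rule finite_Sset_member[OF A])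
  have cA: "card A = m" using A unfolding Sset_iff by blast
  have "card (A - B) = m - card B" using card_Diff_subset[OF finite_subset[OF B fA] B] cA by simp
  moreover have "A - B \<in> Sset U \<Delta> N L (card (A - B))" by (rule Sset_subset[OF A]) blast
  ultimately show ?thesis by simp
qed

lemma ZS_nonneg: "ZS U \<Delta> N L \<beta> m \<ge> 0"
  unfolding ZS_def by (intro sum_nonneg weight_nonneg)

lemma sum_marked_configs:
  assumes "finite T" "\<forall>A\<in>T. finite A \<and> card A = m"
  shows "real m * (\<Sum>A\<in>T. f A) = (\<Sum>p\<in>Sigma T (\<lambda>A. A). (f (fst p) :: real))"
proof -
  have "real m * (\<Sum>A\<in>T. f A) = (\<Sum>A\<in>T. \<Sum>x\<in>A. f A)"
    by (simp add: sum_distrib_left assms(2))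
  also have "\<dots> = (\<Sum>(A,x)\<in>Sigma T (\<lambda>A. A). f A)"
    by (rule sum.Sigma) (use assms in auto)
  finally show ?thesis by (simp add: split_def)
qed

lemma ZS_marked:
  "real m * ZS U \<Delta> N L \<beta> m = (\<Sum>p\<in>Sigma (Sset U \<Delta> N L m) (\<lambda>A. A). weight U N \<beta> (fst p))"
  unfolding ZS_def
proof (rule sum_marked_configs[OF finite_Sset], intro ballI conjI)
  fix A assume A: "A \<in> Sset U \<Delta> N L m"
  then show "finite A" by (rule finite_Sset_member)
  show "card A = m" using A unfolding Sset_iff by blast
qed

subsection \<open>Lower bound: adding a particle far from all others\<close>

text \<open>A particle placed at distance \<open>> L - 1\<close> from every particle of \<open>A \<in> \<S>\<close> is alone in
  each box containing it, so the enlarged configuration stays in \<open>\<S>\<close>.\<close>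

lemma Sset_insert_far:
  assumes N: "N > 0" and L: "odd L"
    and A: "A \<in> Sset U \<Delta> N L (m - 1)" and m: "m \<ge> 1"
    and x: "x \<in> torus N - (\<Union>a\<in>A. tball N (int L - 1) a)"
  shows "x \<notin> A" "insert x A \<in> Sset U \<Delta> N L m"
proof -
  have At: "A \<subseteq> torus N" and cA: "card A = m - 1" and fA: "finite A"
    using A finite_Sset_member[OF A] unfolding Sset_iff by auto
  show xA: "x \<notin> A"
  proof
    assume "x \<in> A"
    then have "x \<in> tball N (int L - 1) x" using At L unfolding tball_def
      by (auto simp: tdist_self odd_pos)
    then show False using x \<open>x \<in> A\<close> by blast
  qed
  show "insert x A \<in> Sset U \<Delta> N L m" unfolding Sset_iff
  proof (intro conjI ballI)
    show "insert x A \<subseteq> torus N" "card (insert x A) = m" using At x xA fA cA m by auto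
    fix z assume z: "z \<in> torus N"
    show "card (insert x A \<inter> box N L z) \<le> kmax U \<Delta>"
    proof (cases "x \<in> box N L z")
      case True
      then have "A \<inter> box N L z = {}" using box_within_tball[OF N L True] x by blast
      then have "insert x A \<inter> box N L z = {x}" using True by auto
      then show ?thesis by (simp add: kmax_def)
    next
      case False
      then have "insert x A \<inter> box N L z = A \<inter> box N L z" by auto
      then show ?thesis using A z unfolding Sset_iff by simp
    qed
  qed
qed

lemma card_far_sites:
  assumes N: "N > 0" and L: "odd L" and A: "finite A" "card A = m - 1"
  shows "real (card (torus N - (\<Union>a\<in>A. tball N (int L - 1) a)))
     \<ge> real (N * N) - real (m - 1) * real ((2 * L - 1)^2)"
proof -
  let ?B = "\<Union>a\<in>A. tball N (int L - 1) a"
  have L1: "L \<ge> 1" using L by (cases L) auto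
  have "N * N \<le> card (torus N - ?B) + card ?B"
    using card_Un_le[of "torus N - ?B" ?B] card_mono[of "(torus N - ?B) \<union> ?B" "torus N"]
      finite_torus A(1) by (simp add: card_torus finite_tball Un_absorb2 Diff_partition)
  moreover have "card ?B \<le> (\<Sum>a\<in>A. card (tball N (int L - 1) a))" by (rule card_UN_le[OF A(1)])
  moreover have "card (tball N (int L - 1) a) \<le> (2 * L - 1)^2" for a
  proof -
    have "card (tball N (int L - 1) a) \<le> nat (2 * (int L - 1) + 1) ^ 2"
      by (rule card_tball[OF N]) (use L1 in simp)
    also have "nat (2 * (int L - 1) + 1) = 2 * L - 1" using L1 by simp
    finally show ?thesis .
  qed
  then have "(\<Sum>a\<in>A. card (tball N (int L - 1) a)) \<le> (m - 1) * (2 * L - 1)^2"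
    using sum_mono[of A "\<lambda>a. card (tball N (int L - 1) a)" "\<lambda>_. (2 * L - 1)^2"] A(2) by simp
  ultimately have "N * N \<le> card (torus N - ?B) + (m - 1) * (2 * L - 1)^2" by linarith
  then have "real (N * N) \<le> real (card (torus N - ?B)) + real ((m - 1) * (2 * L - 1)^2)"
    by (simp only: of_nat_add[symmetric] of_nat_le_iff)
  then show ?thesis by simp
qed

text \<open>Each pair
  (configuration in \<open>\<S>^{(m-1)}\<close>, far site) yields a marked configuration in \<open>\<S>^{(m)}\<close>
  of no smaller weight, injectively.\<close>

lemma ZS_lower_recursion:
  assumes U: "U \<ge> 0" and \<beta>: "\<beta> \<ge> 0" and N: "N > 0" and L: "odd L" and m: "m \<ge> 1"
  shows "(real (N * N) - real (m - 1) * real ((2 * L - 1)^2)) * ZS U \<Delta> N L \<beta> (m - 1)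
     \<le> real m * ZS U \<Delta> N L \<beta> m"
proof -
  let ?S = "\<lambda>m. Sset U \<Delta> N L m" and ?w = "weight U N \<beta>"
  let ?far = "\<lambda>A. torus N - (\<Union>a\<in>A. tball N (int L - 1) a)"
  let ?D = "Sigma (?S (m - 1)) ?far" and ?add = "\<lambda>p. (insert (snd p) (fst p), snd p)"
  have inj: "inj_on ?add ?D"
  proof (rule inj_onI)
    fix p q assume "p \<in> ?D" "q \<in> ?D" and e: "?add p = ?add q"
    then have "snd p \<notin> fst p" "snd q \<notin> fst q"
      using Sset_insert_far(1)[OF N L _ m] by (auto simp: mem_Sigma_iff)
    then show "p = q" using e by (metis Pair_inject insert_ident prod.collapse)
  qed
  have img: "?add ` ?D \<subseteq> Sigma (?S m) (\<lambda>A. A)"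
    using Sset_insert_far(2)[OF N L _ m] by (auto simp: mem_Sigma_iff)
  have members: "finite A" "card A = m - 1" if "A \<in> ?S (m - 1)" for A
    using that finite_Sset_member unfolding Sset_iff by blast+
  have "(real (N * N) - real (m - 1) * real ((2 * L - 1)^2)) * ZS U \<Delta> N L \<beta> (m - 1)
     \<le> (\<Sum>A\<in>?S (m - 1). real (card (?far A)) * ?w A)"
    unfolding ZS_def sum_distrib_left
    by (intro sum_mono mult_right_mono card_far_sites[OF N L] weight_nonneg members)
  also have "\<dots> = (\<Sum>A\<in>?S (m - 1). \<Sum>x\<in>?far A. ?w A)" by simp
  also have "\<dots> = (\<Sum>(A, x)\<in>?D. ?w A)" by (rule sum.Sigma) (use finite_Sset finite_torus in auto)
  also have "\<dots> \<le> (\<Sum>p\<in>?D. ?w (fst (?add p)))"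
    by (rule sum_mono) (auto intro!: weight_mono U \<beta> simp: members(1) mem_Sigma_iff)
  also have "\<dots> = (\<Sum>p\<in>?add ` ?D. ?w (fst p))"
    by (rule sum.reindex[OF inj, of "\<lambda>p. ?w (fst p)", unfolded comp_def, symmetric])
  also have "\<dots> \<le> (\<Sum>p\<in>Sigma (?S m) (\<lambda>A. A). ?w (fst p))"
    by (rule sum_mono2[OF _ img]) (auto intro: finite_Sset_member simp: finite_Sset weight_nonneg)
  also have "\<dots> = real m * ZS U \<Delta> N L \<beta> m" by (rule ZS_marked[symmetric])
  finally show ?thesis .
qed

subsection \<open>Upper bound: decomposing around a marked particle\<close>

definition ZS_at :: "real \<Rightarrow> real \<Rightarrow> nat \<Rightarrow> nat \<Rightarrow> real \<Rightarrow> nat \<Rightarrow> int \<times> int \<Rightarrow> real" where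
  "ZS_at U \<Delta> N L \<beta> m x = (\<Sum>A\<in>{A\<in>Sset U \<Delta> N L m. x \<in> A}. weight U N \<beta> A)"

lemma ZS_marked_by_site:
  "real m * ZS U \<Delta> N L \<beta> m = (\<Sum>x\<in>torus N. ZS_at U \<Delta> N L \<beta> m x)"
proof -
  have "real m * ZS U \<Delta> N L \<beta> m = (\<Sum>A\<in>Sset U \<Delta> N L m. \<Sum>x\<in>{x\<in>torus N. x \<in> A}. weight U N \<beta> A)"
  proof (unfold ZS_def sum_distrib_left, rule sum.cong[OF refl])
    fix A assume "A \<in> Sset U \<Delta> N L m"
    then have "{x\<in>torus N. x \<in> A} = A" "card A = m" unfolding Sset_iff by blast+
    then show "real m * weight U N \<beta> A = (\<Sum>x\<in>{x\<in>torus N. x \<in> A}. weight U N \<beta> A)" by simp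
  qed
  also have "\<dots> = (\<Sum>x\<in>torus N. ZS_at U \<Delta> N L \<beta> m x)"
    unfolding ZS_at_def by (rule sum.swap_restrict[OF finite_Sset finite_torus])
  finally show ?thesis .
qed

definition decoupled :: "nat \<Rightarrow> (int \<times> int) set \<Rightarrow> (int \<times> int) set \<Rightarrow> bool" where
  "decoupled N C A \<longleftrightarrow> C \<subseteq> A \<and> (\<forall>y\<in>C. \<forall>u\<in>A - C. \<not> torus_adj N y u)"

lemma decoupled_sum_bound:
  "(\<Sum>A\<in>{A\<in>Sset U \<Delta> N L m. decoupled N C A}. weight U N \<beta> A)
     \<le> exp (\<beta> * U * real (card (nn_pairs N C))) * ZS U \<Delta> N L \<beta> (m - card C)"
proof -
  let ?T = "{A\<in>Sset U \<Delta> N L m. decoupled N C A}" and ?E = "exp (\<beta> * U * real (card (nn_pairs N C)))"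
  have inj: "inj_on (\<lambda>A. A - C) ?T"
  proof (rule inj_onI)
    fix A B assume "A \<in> ?T" "B \<in> ?T" "A - C = B - C"
    then have "C \<subseteq> A" "C \<subseteq> B" "A - C = B - C" unfolding decoupled_def by auto
    then show "A = B" by (metis Diff_partition)
  qed
  have "(\<Sum>A\<in>?T. weight U N \<beta> A) = ?E * (\<Sum>A\<in>?T. weight U N \<beta> (A - C))"
    unfolding sum_distrib_left
  proof (rule sum.cong[OF refl])
    fix A assume "A \<in> ?T"
    then have S: "A \<in> Sset U \<Delta> N L m" and C: "C \<subseteq> A"
      and no_bond: "\<forall>y\<in>C. \<forall>u\<in>A - C. \<not> torus_adj N y u"
      unfolding decoupled_def by auto
    show "weight U N \<beta> A = ?E * weight U N \<beta> (A - C)"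
      by (rule weight_split[OF C finite_Sset_member[OF S] no_bond])
  qed
  also have "(\<Sum>A\<in>?T. weight U N \<beta> (A - C)) = (\<Sum>B\<in>(\<lambda>A. A - C) ` ?T. weight U N \<beta> B)"
    using inj by (simp add: sum.reindex)
  also have "\<dots> \<le> ZS U \<Delta> N L \<beta> (m - card C)"
    unfolding ZS_def
  proof (intro sum_mono2 finite_Sset weight_nonneg)
    show "(\<lambda>A. A - C) ` ?T \<subseteq> Sset U \<Delta> N L (m - card C)"
      using Sset_remove unfolding decoupled_def by blast
  qed
  finally show ?thesis by (simp add: mult_left_mono)
qed

lemma missing_distance:
  fixes d :: "'a \<Rightarrow> int"
  assumes "finite B" "x \<in> B" "d x = 0" "card B \<le> k"
  shows "\<exists>r\<in>{1..int k + 1}. \<forall>y\<in>B. d y \<noteq> r"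
proof (rule ccontr)
  assume "\<not> ?thesis"
  then have "{0..int k + 1} \<subseteq> d ` B"
    using assms(2,3) by (metis atLeastAtMost_iff image_eqI int_one_le_iff_zero_less subsetI
        order_neq_le_trans)
  then have "card {0..int k + 1} \<le> card (d ` B)" by (rule card_mono[OF finite_imageI[OF assms(1)]])
  also have "\<dots> \<le> card B" by (rule card_image_le[OF assms(1)])
  finally show False using assms(4) by simp
qed

text \<open>If no particle sits at distance exactly \<open>r\<close> from \<open>x\<close>, the particles closer than
  \<open>r\<close> form a decoupled part: nearest neighbours are at distance \<open>\<le> 1\<close>.\<close>

lemma gap_decoupled:
  assumes N: "N > 0" and gap: "\<forall>y\<in>A. tdist N x y \<noteq> r"
  shows "decoupled N {y\<in>A. tdist N x y < r} A"
  unfolding decoupled_def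
proof (intro conjI ballI notI)
  fix y u assume "y \<in> {y\<in>A. tdist N x y < r}" "u \<in> A - {y\<in>A. tdist N x y < r}"
    and adj: "torus_adj N y u"
  then have "tdist N x y < r" "\<not> tdist N x u < r" "tdist N x u \<noteq> r" using gap by auto
  moreover have "tdist N x u \<le> tdist N x y + tdist N y u" by (rule tdist_triangle[OF N])
  moreover have "tdist N y u \<le> 1" by (rule tdist_adj[OF N adj])
  ultimately show False by linarith
qed auto

text \<open>The set of small clusters around \<open>x\<close> that may carry the particle at \<open>x\<close>.\<close>

definition clusters :: "real \<Rightarrow> real \<Rightarrow> nat \<Rightarrow> int \<times> int \<Rightarrow> nat \<Rightarrow> (int \<times> int) set set" where
  "clusters U \<Delta> N x m = {C. C \<subseteq> tball N (int (kmax U \<Delta>)) x \<and> 2 \<le> card C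
                              \<and> card C \<le> kmax U \<Delta> \<and> card C \<le> m}"

lemma finite_clusters: "finite (clusters U \<Delta> N x m)"
  by (rule finite_subset[of _ "Pow (tball N (int (kmax U \<Delta>)) x)"])
     (auto simp: clusters_def finite_tball)

lemma card_clusters:
  assumes "N > 0" shows "card (clusters U \<Delta> N x m) \<le> 2 ^ ((2 * kmax U \<Delta> + 1)^2)"
proof -
  let ?B = "tball N (int (kmax U \<Delta>)) x"
  have "card (clusters U \<Delta> N x m) \<le> card (Pow ?B)"
    by (rule card_mono) (auto simp: clusters_def finite_tball)
  also have "\<dots> = 2 ^ card ?B" by (simp add: card_Pow finite_tball)
  also have "\<dots> \<le> 2 ^ ((2 * kmax U \<Delta> + 1)^2)"
  proof (rule power_increasing)
    have "nat (2 * int (kmax U \<Delta>) + 1) = 2 * kmax U \<Delta> + 1" by simp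
    then show "card ?B \<le> (2 * kmax U \<Delta> + 1)^2" using card_tball[OF assms, of "int (kmax U \<Delta>)" x] by simp
  qed simp
  finally show ?thesis .
qed

text \<open>A particle at \<open>x\<close> with an occupied neighbour lies in a decoupled cluster of at most
  \<open>kmax\<close> particles within distance \<open>kmax\<close>: the box around \<open>x\<close> contains at most \<open>kmax\<close>
  particles, so some distance \<open>r \<le> kmax + 1\<close> is not occupied.\<close>

lemma cluster_exists:
  assumes N: "N > 0" and Lbig: "int (kmax U \<Delta>) + 1 \<le> (int L - 1) div 2"
    and A: "A \<in> Sset U \<Delta> N L m" and x: "x \<in> A" and z: "z \<in> A" "torus_adj N x z"
  shows "\<exists>C\<in>clusters U \<Delta> N x m. decoupled N C A"
proof -
  let ?k = "kmax U \<Delta>"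
  let ?B = "{y\<in>A. tdist N x y \<le> int ?k + 1}"
  have At: "A \<subseteq> torus N" and fA: "finite A" and cA: "card A = m"
    using A finite_Sset_member[OF A] unfolding Sset_iff by auto
  have "?B \<subseteq> A \<inter> box N L x" using At Lbig unfolding box_eq_tball tball_def by auto
  then have "card ?B \<le> card (A \<inter> box N L x)" by (intro card_mono) (use fA in auto)
  also have "\<dots> \<le> ?k" using A x At unfolding Sset_iff by blast
  finally have cB: "card ?B \<le> ?k" .
  have "\<exists>r\<in>{1..int ?k + 1}. \<forall>y\<in>?B. tdist N x y \<noteq> r"
    by (rule missing_distance) (use fA x cB in \<open>auto simp: tdist_self\<close>)
  then obtain r where r: "r \<in> {1..int ?k + 1}" "\<forall>y\<in>?B. tdist N x y \<noteq> r" by blast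
  then have gap: "\<forall>y\<in>A. tdist N x y \<noteq> r" by auto
  define C where "C = {y\<in>A. tdist N x y < r}"
  have "tdist N x z \<noteq> 0" using tdist_eq_0[OF N, of x z] z x At unfolding torus_adj_def by auto
  then have "tdist N x z = 1" using tdist_adj[OF N z(2)] tdist_nonneg[OF N, of x z] by linarith
  then have "x \<in> C" "z \<in> C" "x \<noteq> z" using r gap x z unfolding C_def torus_adj_def
    by (auto simp: tdist_self)
  then have "2 \<le> card C" using card_mono[of C "{x, z}"] fA unfolding C_def by auto
  moreover have "C \<subseteq> ?B" "C \<subseteq> A" using r(1) unfolding C_def by auto
  then have "card C \<le> ?k" "card C \<le> m"
    using card_mono[of ?B C] card_mono[of A C] fA cA cB by auto
  moreover have "C \<subseteq> tball N (int ?k) x" using At r(1) unfolding C_def tball_def by auto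
  ultimately show ?thesis
    using gap_decoupled[OF N gap] unfolding C_def clusters_def by blast
qed

text \<open>Configurations in which \<open>x\<close> is an isolated particle: remove it.\<close>

lemma isolated_bound:
  "(\<Sum>A\<in>{A\<in>Sset U \<Delta> N L m. x \<in> A \<and> \<not> (\<exists>z\<in>A. torus_adj N x z)}. weight U N \<beta> A)
     \<le> ZS U \<Delta> N L \<beta> (m - 1)"
proof -
  have "(\<Sum>A\<in>{A\<in>Sset U \<Delta> N L m. x \<in> A \<and> \<not> (\<exists>z\<in>A. torus_adj N x z)}. weight U N \<beta> A)
      \<le> (\<Sum>A\<in>{A\<in>Sset U \<Delta> N L m. decoupled N {x} A}. weight U N \<beta> A)"
    by (rule sum_mono2) (auto simp: finite_Sset decoupled_def weight_nonneg)
  also have "\<dots> \<le> ZS U \<Delta> N L \<beta> (m - 1)"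
  proof -
    have "nn_pairs N {x} = {}" unfolding nn_pairs_def torus_adj_def by auto
    then show ?thesis
      using decoupled_sum_bound[where C="{x}" and U=U and \<Delta>=\<Delta> and N=N and L=L and m=m and \<beta>=\<beta>]
      by simp
  qed
  finally show ?thesis .
qed

text \<open>Configurations in which \<open>x\<close> has an occupied neighbour: remove a decoupled small
  cluster containing \<open>x\<close>. Every such configuration is counted for at least one cluster.\<close>

lemma clustered_bound:
  assumes N: "N > 0" and Lbig: "int (kmax U \<Delta>) + 1 \<le> (int L - 1) div 2"
  shows "(\<Sum>A\<in>{A\<in>Sset U \<Delta> N L m. x \<in> A \<and> (\<exists>z\<in>A. torus_adj N x z)}. weight U N \<beta> A)
     \<le> (\<Sum>C\<in>clusters U \<Delta> N x m. exp (\<beta> * U * real (card (nn_pairs N C))) * ZS U \<Delta> N L \<beta> (m - card C))"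
proof -
  let ?S = "Sset U \<Delta> N L m" and ?w = "weight U N \<beta>" and ?Cl = "clusters U \<Delta> N x m"
  let ?T = "{A\<in>?S. x \<in> A \<and> (\<exists>z\<in>A. torus_adj N x z)}"
  have fin: "finite {A\<in>?S. P A}" for P using finite_Sset by simp
  have "(\<Sum>A\<in>?T. ?w A) \<le> (\<Sum>A\<in>?T. \<Sum>C\<in>{C\<in>?Cl. decoupled N C A}. ?w A)"
  proof (rule sum_mono)
    fix A assume "A \<in> ?T"
    then obtain z where "A \<in> ?S" "x \<in> A" "z \<in> A" "torus_adj N x z" by blast
    then obtain C where "C \<in> ?Cl" "decoupled N C A" using cluster_exists[OF N Lbig] by blast
    then have "1 \<le> card {C\<in>?Cl. decoupled N C A}"
      using finite_clusters by (auto simp: Suc_le_eq card_gt_0_iff)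
    then show "?w A \<le> (\<Sum>C\<in>{C\<in>?Cl. decoupled N C A}. ?w A)"
      using weight_nonneg[of U N \<beta> A] by (simp add: mult_le_cancel_right1)
  qed
  also have "\<dots> = (\<Sum>C\<in>?Cl. \<Sum>A\<in>{A\<in>?T. decoupled N C A}. ?w A)"
    by (rule sum.swap_restrict[OF fin finite_clusters])
  also have "\<dots> \<le> (\<Sum>C\<in>?Cl. exp (\<beta> * U * real (card (nn_pairs N C))) * ZS U \<Delta> N L \<beta> (m - card C))"
  proof (rule sum_mono)
    fix C
    have "(\<Sum>A\<in>{A\<in>?T. decoupled N C A}. ?w A) \<le> (\<Sum>A\<in>{A\<in>?S. decoupled N C A}. ?w A)"
      by (rule sum_mono2[OF fin]) (auto simp: weight_nonneg)
    also have "\<dots> \<le> exp (\<beta> * U * real (card (nn_pairs N C))) * ZS U \<Delta> N L \<beta> (m - card C)"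
      by (rule decoupled_sum_bound)
    finally show "(\<Sum>A\<in>{A\<in>?T. decoupled N C A}. ?w A)
        \<le> exp (\<beta> * U * real (card (nn_pairs N C))) * ZS U \<Delta> N L \<beta> (m - card C)" .
  qed
  finally show ?thesis .
qed

lemma ZS_at_bound:
  assumes N: "N > 0" and Lbig: "int (kmax U \<Delta>) + 1 \<le> (int L - 1) div 2"
  shows "ZS_at U \<Delta> N L \<beta> m x \<le> ZS U \<Delta> N L \<beta> (m - 1)
     + (\<Sum>C\<in>clusters U \<Delta> N x m. exp (\<beta> * U * real (card (nn_pairs N C))) * ZS U \<Delta> N L \<beta> (m - card C))"
proof -
  let ?S = "Sset U \<Delta> N L m" and ?w = "weight U N \<beta>"
  let ?T1 = "{A\<in>?S. x \<in> A \<and> \<not> (\<exists>z\<in>A. torus_adj N x z)}"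
  let ?T2 = "{A\<in>?S. x \<in> A \<and> (\<exists>z\<in>A. torus_adj N x z)}"
  have fin: "finite {A\<in>?S. P A}" for P using finite_Sset by simp
  have "{A\<in>?S. x \<in> A} = ?T1 \<union> ?T2" by blast
  then have "ZS_at U \<Delta> N L \<beta> m x = (\<Sum>A\<in>?T1 \<union> ?T2. ?w A)" unfolding ZS_at_def by (rule sum.cong) simp
  also have "\<dots> = (\<Sum>A\<in>?T1. ?w A) + (\<Sum>A\<in>?T2. ?w A)" by (rule sum.union_disjoint[OF fin fin]) blast
  finally show ?thesis
    using isolated_bound[where U=U and \<Delta>=\<Delta> and N=N and L=L and m=m and x=x and \<beta>=\<beta>]
      clustered_bound[OF N Lbig, where m=m and x=x and \<beta>=\<beta>] by linarith
qed

subsection \<open>The recursion inequalities in the low-density regime\<close>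

definition cluster_const :: "real \<Rightarrow> real \<Rightarrow> nat" where
  "cluster_const U \<Delta> = 2 ^ ((2 * kmax U \<Delta> + 1)^2) * 4 ^ kmax U \<Delta>"

text \<open>Relative weight of the clusters around a site; it vanishes as \<open>\<beta> \<rightarrow> \<infinity>\<close>.\<close>

definition theta :: "real \<Rightarrow> real \<Rightarrow> real \<Rightarrow> real" where
  "theta U \<Delta> \<beta> = real (cluster_const U \<Delta>) * exp (- \<beta> * eta U \<Delta>)"

lemma theta_nonneg: "theta U \<Delta> \<beta> \<ge> 0"
  unfolding theta_def by simp

lemma ZS_ratio_lower:
  assumes "U \<ge> 0" "\<beta> \<ge> 0" "N > 0" "odd L" and m: "1 \<le> m" "m \<le> n"
  shows "(real N * real N - 4 * real n * real L ^ 2) * ZS U \<Delta> N L \<beta> (m - 1) \<le> real m * ZS U \<Delta> N L \<beta> m"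
proof -
  have "real ((2 * L - 1)^2) \<le> real ((2 * L)^2)" by (intro of_nat_mono power_mono) auto
  then have "real (m - 1) * real ((2 * L - 1)^2) \<le> real n * (4 * real L ^ 2)"
    using m by (intro mult_mono) (auto simp: power_mult_distrib)
  then have "real N * real N - 4 * real n * real L ^ 2 \<le> real (N * N) - real (m - 1) * real ((2 * L - 1)^2)"
    by simp
  then have "(real N * real N - 4 * real n * real L ^ 2) * ZS U \<Delta> N L \<beta> (m - 1)
      \<le> (real (N * N) - real (m - 1) * real ((2 * L - 1)^2)) * ZS U \<Delta> N L \<beta> (m - 1)"
    by (rule mult_right_mono[OF _ ZS_nonneg])
  also have "\<dots> \<le> real m * ZS U \<Delta> N L \<beta> m" by (rule ZS_lower_recursion) (use assms in auto)
  finally show ?thesis .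
qed

lemma Zcheck_le_ZS: "Zcheck U \<Delta> N L \<beta> m \<le> ZS U \<Delta> N L \<beta> m"
  unfolding Zcheck_def ZS_def weight_def[symmetric]
  by (rule sum_mono2[OF finite_Sset]) (auto simp: weight_nonneg)

lemma ZS_minus_Zcheck_le_box_sum:
  "ZS U \<Delta> N L \<beta> m - Zcheck U \<Delta> N L \<beta> m \<le> (\<Sum>y\<in>box N L (0, 0). ZS_at U \<Delta> N L \<beta> m y)"
proof -
  let ?S = "Sset U \<Delta> N L m" and ?B = "box N L (0, 0)" and ?w = "weight U N \<beta>"
  let ?Tin = "{A\<in>?S. \<not> A \<subseteq> torus N - ?B}" and ?Tout = "{A\<in>?S. A \<subseteq> torus N - ?B}"
  have fB: "finite ?B" by (rule finite_subset[OF _ finite_torus]) (auto simp: box_def)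
  have fin: "finite {A\<in>?S. P A}" for P using finite_Sset by simp
  have "?S = ?Tout \<union> ?Tin" by blast
  then have "ZS U \<Delta> N L \<beta> m = (\<Sum>A\<in>?Tout \<union> ?Tin. ?w A)" unfolding ZS_def by (simp only:)
  also have "\<dots> = Zcheck U \<Delta> N L \<beta> m + (\<Sum>A\<in>?Tin. ?w A)"
    unfolding Zcheck_def weight_def[symmetric] by (rule sum.union_disjoint[OF fin fin]) blast
  finally have "ZS U \<Delta> N L \<beta> m - Zcheck U \<Delta> N L \<beta> m = (\<Sum>A\<in>?Tin. ?w A)" by simp
  also have "\<dots> \<le> (\<Sum>A\<in>?Tin. real (card (A \<inter> ?B)) * ?w A)"
  proof (rule sum_mono)
    fix A assume "A \<in> ?Tin"
    then have "A \<inter> ?B \<noteq> {}" unfolding Sset_iff by blast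
    then have "card (A \<inter> ?B) \<ge> 1" using fB by (simp add: Suc_le_eq card_gt_0_iff)
    then show "?w A \<le> real (card (A \<inter> ?B)) * ?w A"
      using weight_nonneg[of U N \<beta> A] by (simp add: mult_le_cancel_right1)
  qed
  also have "\<dots> \<le> (\<Sum>A\<in>?S. real (card (A \<inter> ?B)) * ?w A)"
    by (rule sum_mono2[OF finite_Sset]) (auto simp: weight_nonneg)
  also have "\<dots> = (\<Sum>A\<in>?S. \<Sum>y\<in>{y\<in>?B. y \<in> A}. ?w A)"
    by (intro sum.cong refl) (simp add: Int_commute Collect_conj_eq inf_set_def[symmetric])
  also have "\<dots> = (\<Sum>y\<in>?B. ZS_at U \<Delta> N L \<beta> m y)"
    unfolding ZS_at_def by (rule sum.swap_restrict[OF finite_Sset fB])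
  finally show ?thesis .
qed

locale dilute_regime =
  fixes U \<Delta> :: real and N L n :: nat and \<beta> :: real
  assumes U: "U > 0" "U < \<Delta>" "\<Delta> < 2 * U" and \<beta>: "\<beta> \<ge> 0" and N: "N > 0" and L: "odd L"
    and Lbig: "int (kmax U \<Delta>) + 1 \<le> (int L - 1) div 2" and Nbig: "kmax U \<Delta> < N"
    and dilute: "8 * real n * real L ^ 2 \<le> real N * real N"
    and n_le: "real n \<le> 2 * exp (- \<beta> * \<Delta>) * (real N * real N)"
begin

lemma ZS_step_down:
  assumes m: "1 \<le> m" "m \<le> n"
  shows "ZS U \<Delta> N L \<beta> (m - 1) \<le> (2 * real m / (real N * real N)) * ZS U \<Delta> N L \<beta> m"
proof -
  have "real N * real N / 2 * ZS U \<Delta> N L \<beta> (m - 1)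
      \<le> (real N * real N - 4 * real n * real L ^ 2) * ZS U \<Delta> N L \<beta> (m - 1)"
    using dilute by (intro mult_right_mono ZS_nonneg) simp
  also have "\<dots> \<le> real m * ZS U \<Delta> N L \<beta> m" by (rule ZS_ratio_lower) (use U \<beta> N L m in auto)
  finally show ?thesis using N by (simp add: field_simps)
qed

lemma ZS_iter_down:
  assumes "j \<le> m" "m \<le> n"
  shows "ZS U \<Delta> N L \<beta> (m - j) \<le> (2 * real m / (real N * real N)) ^ j * ZS U \<Delta> N L \<beta> m"
  using assms(1)
proof (induction j)
  case (Suc j)
  have "ZS U \<Delta> N L \<beta> (m - Suc j) = ZS U \<Delta> N L \<beta> (m - j - 1)" by simp
  also have "\<dots> \<le> (2 * real (m - j) / (real N * real N)) * ZS U \<Delta> N L \<beta> (m - j)"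
    by (rule ZS_step_down) (use Suc.prems assms(2) in auto)
  also have "\<dots> \<le> (2 * real m / (real N * real N)) * ZS U \<Delta> N L \<beta> (m - j)"
    by (rule mult_right_mono[OF _ ZS_nonneg]) (simp add: divide_right_mono)
  also have "\<dots> \<le> (2 * real m / (real N * real N)) * ((2 * real m / (real N * real N)) ^ j * ZS U \<Delta> N L \<beta> m)"
    by (rule mult_left_mono) (use Suc in auto)
  finally show ?case by simp
qed simp

lemma ZS_pos: "m \<le> n \<Longrightarrow> ZS U \<Delta> N L \<beta> m > 0"
proof (induction m)
  case 0
  have "Sset U \<Delta> N L 0 = {{}}"
    by (auto simp: Sset_iff finite_subset[OF _ finite_torus] card_eq_0_iff)
  then show ?case unfolding ZS_def by (simp add: weight_pos)
next
  case (Suc m)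
  then have "0 < ZS U \<Delta> N L \<beta> m" by simp
  also have "\<dots> \<le> (2 * real (Suc m) / (real N * real N)) * ZS U \<Delta> N L \<beta> (Suc m)"
    using ZS_step_down[of "Suc m"] Suc.prems by simp
  finally have "0 < (2 * real (Suc m) / (real N * real N)) * ZS U \<Delta> N L \<beta> (Suc m)" .
  moreover have "0 < 2 * real (Suc m) / (real N * real N)" using N by simp
  ultimately show ?case by (rule zero_less_mult_pos)
qed

text \<open>A cluster of \<open>j\<close> particles gains at most \<open>(j - 1)\<Delta> - eta\<close>, while removing it costs
  at most \<open>(4 e^{-\<beta>\<Delta>})^j\<close>; the net contribution is \<open>O(e^{-\<beta> eta} e^{-\<beta>\<Delta>})\<close>.\<close>

lemma cluster_term:
  assumes C: "C \<in> clusters U \<Delta> N x m" and m: "m \<le> n"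
  shows "exp (\<beta> * U * real (card (nn_pairs N C))) * ZS U \<Delta> N L \<beta> (m - card C)
    \<le> 4 ^ kmax U \<Delta> * exp (- \<beta> * eta U \<Delta>) * exp (- \<beta> * \<Delta>) * ZS U \<Delta> N L \<beta> m"
proof -
  define j \<rho> where "j = card C" and "\<rho> = exp (- \<beta> * \<Delta>)"
  have Ct: "C \<subseteq> torus N" using C tball_subset_torus unfolding clusters_def by blast
  have j2: "2 \<le> j" and jk: "j \<le> kmax U \<Delta>" and jm: "j \<le> m" using C unfolding clusters_def j_def by auto
  have "U * real (card (nn_pairs N C)) \<le> real (j - 1) * \<Delta> - eta U \<Delta>"
    using cluster_energy_bound[OF U Ct] Nbig j2 jk unfolding j_def by simp
  then have energy: "exp (\<beta> * U * real (card (nn_pairs N C))) \<le> exp (\<beta> * (real (j - 1) * \<Delta> - eta U \<Delta>))"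
    using mult_left_mono[OF _ \<beta>] by (simp add: mult.assoc)
  have "2 * real m / (real N * real N) \<le> 4 * \<rho>"
    using n_le m N unfolding \<rho>_def by (simp add: field_simps)
  then have removal: "ZS U \<Delta> N L \<beta> (m - j) \<le> (4 * \<rho>) ^ j * ZS U \<Delta> N L \<beta> m"
    using ZS_iter_down[OF jm m] by (meson ZS_nonneg mult_right_mono order_trans power_mono
        divide_nonneg_nonneg mult_nonneg_nonneg of_nat_0_le_iff zero_le_numeral)
  have "exp (\<beta> * (real (j - 1) * \<Delta> - eta U \<Delta>)) * \<rho> ^ j = exp (- \<beta> * eta U \<Delta>) * \<rho>"
    using j2 unfolding \<rho>_def by (simp add: exp_of_nat_mult[symmetric] exp_add[symmetric] of_nat_diff algebra_simps)
  then have eq: "exp (\<beta> * (real (j - 1) * \<Delta> - eta U \<Delta>)) * ((4 * \<rho>) ^ j * ZS U \<Delta> N L \<beta> m)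
      = 4 ^ j * exp (- \<beta> * eta U \<Delta>) * \<rho> * ZS U \<Delta> N L \<beta> m"
    by (simp add: power_mult_distrib algebra_simps)
  have "exp (\<beta> * U * real (card (nn_pairs N C))) * ZS U \<Delta> N L \<beta> (m - j)
      \<le> exp (\<beta> * (real (j - 1) * \<Delta> - eta U \<Delta>)) * ((4 * \<rho>) ^ j * ZS U \<Delta> N L \<beta> m)"
    by (rule mult_mono[OF energy removal]) (simp_all add: ZS_nonneg)
  also have "\<dots> = 4 ^ j * exp (- \<beta> * eta U \<Delta>) * \<rho> * ZS U \<Delta> N L \<beta> m" by (rule eq)
  also have "\<dots> \<le> 4 ^ kmax U \<Delta> * exp (- \<beta> * eta U \<Delta>) * \<rho> * ZS U \<Delta> N L \<beta> m"
    using jk by (intro mult_right_mono power_increasing ZS_nonneg) (auto simp: \<rho>_def)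
  finally show ?thesis unfolding j_def \<rho>_def .
qed

lemma cluster_sum_bound:
  assumes "m \<le> n"
  shows "(\<Sum>C\<in>clusters U \<Delta> N x m. exp (\<beta> * U * real (card (nn_pairs N C))) * ZS U \<Delta> N L \<beta> (m - card C))
    \<le> theta U \<Delta> \<beta> * exp (- \<beta> * \<Delta>) * ZS U \<Delta> N L \<beta> m"
proof -
  let ?c = "4 ^ kmax U \<Delta> * exp (- \<beta> * eta U \<Delta>) * exp (- \<beta> * \<Delta>) * ZS U \<Delta> N L \<beta> m"
  have "(\<Sum>C\<in>clusters U \<Delta> N x m. exp (\<beta> * U * real (card (nn_pairs N C))) * ZS U \<Delta> N L \<beta> (m - card C))
      \<le> real (card (clusters U \<Delta> N x m)) * ?c"
    using sum_mono[of "clusters U \<Delta> N x m" _ "\<lambda>_. ?c"] cluster_term[OF _ assms] by simp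
  also have "\<dots> \<le> real (2 ^ ((2 * kmax U \<Delta> + 1)^2)) * ?c"
    by (intro mult_right_mono ZS_nonneg mult_nonneg_nonneg) (use card_clusters[OF N] in auto)
  also have "\<dots> = theta U \<Delta> \<beta> * exp (- \<beta> * \<Delta>) * ZS U \<Delta> N L \<beta> m"
    unfolding theta_def cluster_const_def by (simp add: algebra_simps)
  finally show ?thesis .
qed

lemma ZS_upper_recursion:
  assumes "m \<le> n"
  shows "real m * ZS U \<Delta> N L \<beta> m \<le> real N * real N * ZS U \<Delta> N L \<beta> (m - 1)
     + real N * real N * theta U \<Delta> \<beta> * exp (- \<beta> * \<Delta>) * ZS U \<Delta> N L \<beta> m"
proof -
  have "real m * ZS U \<Delta> N L \<beta> m = (\<Sum>x\<in>torus N. ZS_at U \<Delta> N L \<beta> m x)" by (rule ZS_marked_by_site)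
  also have "\<dots> \<le> (\<Sum>x\<in>torus N. ZS U \<Delta> N L \<beta> (m - 1) + theta U \<Delta> \<beta> * exp (- \<beta> * \<Delta>) * ZS U \<Delta> N L \<beta> m)"
    by (intro sum_mono order_trans[OF ZS_at_bound[OF N Lbig]] add_left_mono cluster_sum_bound assms)
  also have "\<dots> = real N * real N * (ZS U \<Delta> N L \<beta> (m - 1) + theta U \<Delta> \<beta> * exp (- \<beta> * \<Delta>) * ZS U \<Delta> N L \<beta> m)"
    by (simp add: card_torus)
  finally show ?thesis by (simp add: algebra_simps)
qed

text \<open>Each of the \<open>L^2\<close> sites of the box \<open>B_{L,L}(0)\<close> is occupied with relative weight at
  most \<open>2m/N^2 + theta e^{-\<beta>\<Delta>}\<close>, so \<open>Zcheck(m)\<close> differs little from \<open>ZS(m)\<close>.\<close>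

lemma ZS_minus_Zcheck:
  assumes m: "1 \<le> m" "m \<le> n"
  shows "ZS U \<Delta> N L \<beta> m - Zcheck U \<Delta> N L \<beta> m
    \<le> real L ^ 2 * (2 * real m / (real N * real N) + theta U \<Delta> \<beta> * exp (- \<beta> * \<Delta>)) * ZS U \<Delta> N L \<beta> m"
proof -
  let ?B = "box N L (0, 0)" and ?e = "2 * real m / (real N * real N) + theta U \<Delta> \<beta> * exp (- \<beta> * \<Delta>)"
  have site: "ZS_at U \<Delta> N L \<beta> m y \<le> ?e * ZS U \<Delta> N L \<beta> m" for y
    unfolding distrib_right
    using ZS_at_bound[OF N Lbig, of \<beta> m y] ZS_step_down[OF m] cluster_sum_bound[OF m(2), of y]
    by linarith
  have "ZS U \<Delta> N L \<beta> m - Zcheck U \<Delta> N L \<beta> m \<le> (\<Sum>y\<in>?B. ZS_at U \<Delta> N L \<beta> m y)"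
    by (rule ZS_minus_Zcheck_le_box_sum)
  also have "\<dots> \<le> (\<Sum>y\<in>?B. ?e * ZS U \<Delta> N L \<beta> m)" by (rule sum_mono[OF site])
  also have "\<dots> = real (card ?B) * (?e * ZS U \<Delta> N L \<beta> m)" by (rule sum_constant)
  also have "\<dots> \<le> real L ^ 2 * (?e * ZS U \<Delta> N L \<beta> m)"
    using card_box[OF N L, of "(0, 0)"]
    by (intro mult_right_mono mult_nonneg_nonneg add_nonneg_nonneg ZS_nonneg theta_nonneg)
       (auto simp flip: of_nat_power)
  finally show ?thesis by (simp add: mult.assoc)
qed

end

subsection \<open>Asymptotics of sequences of partition functions satisfying the recursions\<close>

lemma step_ratio_bounds:
  fixes \<rho> \<Lambda> c \<theta> m W0 W1 :: real
  assumes pos: "\<rho> > 0" "\<Lambda> > 0" "c < 1" "W1 > 0"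
    and lower: "(1 - c) * \<Lambda> * W0 \<le> m * W1"
    and upper: "m * W1 \<le> \<Lambda> * W0 + \<Lambda> * \<theta> * \<rho> * W1"
  shows "m / (\<rho> * \<Lambda>) - \<theta> \<le> W0 / (\<rho> * W1)" "W0 / (\<rho> * W1) \<le> (m / (\<rho> * \<Lambda>)) / (1 - c)"
proof -
  have "m * W1 / (\<rho> * \<Lambda> * W1) \<le> (\<Lambda> * W0 + \<Lambda> * \<theta> * \<rho> * W1) / (\<rho> * \<Lambda> * W1)"
    using upper pos by (intro divide_right_mono) auto
  moreover have "m * W1 / (\<rho> * \<Lambda> * W1) = m / (\<rho> * \<Lambda>)" using pos by simp
  moreover have "(\<Lambda> * W0 + \<Lambda> * \<theta> * \<rho> * W1) / (\<rho> * \<Lambda> * W1) = W0 / (\<rho> * W1) + \<theta>"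
    using pos by (simp add: field_simps)
  ultimately show "m / (\<rho> * \<Lambda>) - \<theta> \<le> W0 / (\<rho> * W1)" by linarith
  have "W0 \<le> m * W1 / ((1 - c) * \<Lambda>)" using lower pos by (simp add: field_simps)
  then have "W0 / (\<rho> * W1) \<le> m * W1 / ((1 - c) * \<Lambda>) / (\<rho> * W1)"
    using pos by (intro divide_right_mono) auto
  also have "m * W1 / ((1 - c) * \<Lambda>) / (\<rho> * W1) = (m / (\<rho> * \<Lambda>)) / (1 - c)"
    using pos by (simp add: field_simps)
  finally show "W0 / (\<rho> * W1) \<le> (m / (\<rho> * \<Lambda>)) / (1 - c)" .
qed

lemma density_top:
  fixes n :: "real \<Rightarrow> nat" and X :: "real \<Rightarrow> real"
  assumes X_top: "filterlim X at_top at_top" and dens: "((\<lambda>\<beta>. real (n \<beta>) / X \<beta>) \<longlongrightarrow> 1) at_top"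
  shows "filterlim (\<lambda>\<beta>. real (n \<beta>)) at_top at_top"
proof -
  have "filterlim (\<lambda>\<beta>. real (n \<beta>) / X \<beta> * X \<beta>) at_top at_top"
    by (rule filterlim_tendsto_pos_mult_at_top[OF dens _ X_top]) simp
  moreover have "\<forall>\<^sub>F \<beta> in at_top. X \<beta> > 0" using X_top by (simp add: filterlim_at_top_dense)
  then have "\<forall>\<^sub>F \<beta> in at_top. real (n \<beta>) / X \<beta> * X \<beta> = real (n \<beta>)"
    by eventually_elim simp
  ultimately show ?thesis using filterlim_cong by fastforce
qed

lemma density_shift:
  fixes n :: "real \<Rightarrow> nat" and X :: "real \<Rightarrow> real"
  assumes X_top: "filterlim X at_top at_top" and dens: "((\<lambda>\<beta>. real (n \<beta>) / X \<beta>) \<longlongrightarrow> 1) at_top"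
  shows "((\<lambda>\<beta>. real (n \<beta> - i) / X \<beta>) \<longlongrightarrow> 1) at_top"
proof (rule tendsto_sandwich[of "\<lambda>\<beta>. real (n \<beta>) / X \<beta> - real i * inverse (X \<beta>)" _ _ "\<lambda>\<beta>. real (n \<beta>) / X \<beta>"])
  have X_pos: "\<forall>\<^sub>F \<beta> in at_top. X \<beta> > 0" using X_top by (simp add: filterlim_at_top_dense)
  have diff: "real (n \<beta>) - real i \<le> real (n \<beta> - i)" for \<beta> by (cases "i \<le> n \<beta>") (simp_all add: of_nat_diff)
  show "\<forall>\<^sub>F \<beta> in at_top. real (n \<beta>) / X \<beta> - real i * inverse (X \<beta>) \<le> real (n \<beta> - i) / X \<beta>"
    using X_pos
  proof eventually_elim
    case (elim \<beta>)
    have "real (n \<beta>) / X \<beta> - real i * inverse (X \<beta>) = (real (n \<beta>) - real i) / X \<beta>"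
      by (simp add: divide_inverse left_diff_distrib)
    also have "\<dots> \<le> real (n \<beta> - i) / X \<beta>" using elim diff by (intro divide_right_mono) auto
    finally show ?case .
  qed
  show "\<forall>\<^sub>F \<beta> in at_top. real (n \<beta> - i) / X \<beta> \<le> real (n \<beta>) / X \<beta>"
    using X_pos by eventually_elim (simp add: divide_right_mono)
  show "((\<lambda>\<beta>. real (n \<beta>) / X \<beta> - real i * inverse (X \<beta>)) \<longlongrightarrow> 1) at_top"
    using tendsto_diff[OF dens tendsto_mult[OF tendsto_const tendsto_inverse_0_at_top[OF X_top]]] by simp
qed (fact dens)

lemma prod_ratio_telescope:
  fixes f :: "nat \<Rightarrow> real"
  assumes "\<rho> > 0" "t \<le> n" "\<forall>j\<le>t. f (n - j) > 0"
  shows "(\<Prod>i<t. f (n - i - 1) / (\<rho> * f (n - i))) = f (n - t) / (\<rho> ^ t * f n)"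
  using assms(2,3)
proof (induction t)
  case (Suc t)
  have ft: "f (n - t) > 0" and fn: "f n > 0"
    using Suc.prems(2)[rule_format, of t] Suc.prems(2)[rule_format, of 0] by simp_all
  have "(\<Prod>i<Suc t. f (n - i - 1) / (\<rho> * f (n - i)))
      = f (n - t) / (\<rho> ^ t * f n) * (f (n - t - 1) / (\<rho> * f (n - t)))"
    using Suc by simp
  also have "\<dots> = f (n - Suc t) / (\<rho> ^ Suc t * f n)"
    using ft fn assms(1) by (simp add: field_simps)
  finally show ?case .
qed simp

definition recursion_bounds :: "(nat \<Rightarrow> real) \<Rightarrow> nat \<Rightarrow> real \<Rightarrow> real \<Rightarrow> real \<Rightarrow> real \<Rightarrow> bool" where
  "recursion_bounds W n \<rho> \<Lambda> c \<theta> \<longleftrightarrow> \<rho> > 0 \<and> \<Lambda> > 0 \<and> c < 1 \<and>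
     (\<forall>m \<le> n. W m > 0 \<and> (1 \<le> m \<longrightarrow>
        (1 - c) * \<Lambda> * W (m - 1) \<le> real m * W m \<and>
        real m * W m \<le> \<Lambda> * W (m - 1) + \<Lambda> * \<theta> * \<rho> * W m))"

lemma step_ratio_tendsto:
  fixes W :: "real \<Rightarrow> nat \<Rightarrow> real" and n :: "real \<Rightarrow> nat" and \<rho> \<Lambda> c \<theta> :: "real \<Rightarrow> real"
  assumes X_top: "filterlim (\<lambda>\<beta>. \<rho> \<beta> * \<Lambda> \<beta>) at_top at_top"
    and dens: "((\<lambda>\<beta>. real (n \<beta>) / (\<rho> \<beta> * \<Lambda> \<beta>)) \<longlongrightarrow> 1) at_top"
    and c_lim: "(c \<longlongrightarrow> 0) at_top" and \<theta>_lim: "(\<theta> \<longlongrightarrow> 0) at_top"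
    and rec: "\<forall>\<^sub>F \<beta> in at_top. recursion_bounds (W \<beta>) (n \<beta>) (\<rho> \<beta>) (\<Lambda> \<beta>) (c \<beta>) (\<theta> \<beta>)"
  shows "((\<lambda>\<beta>. W \<beta> (n \<beta> - i - 1) / (\<rho> \<beta> * W \<beta> (n \<beta> - i))) \<longlongrightarrow> 1) at_top"
proof (rule tendsto_sandwich[of "\<lambda>\<beta>. real (n \<beta> - i) / (\<rho> \<beta> * \<Lambda> \<beta>) - \<theta> \<beta>" _ _
      "\<lambda>\<beta>. real (n \<beta> - i) / (\<rho> \<beta> * \<Lambda> \<beta>) / (1 - c \<beta>)"])
  have "\<forall>\<^sub>F \<beta> in at_top. real (i + 1) \<le> real (n \<beta>)"
    using density_top[OF X_top dens] unfolding filterlim_at_top by blast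
  with rec have "\<forall>\<^sub>F \<beta> in at_top.
      real (n \<beta> - i) / (\<rho> \<beta> * \<Lambda> \<beta>) - \<theta> \<beta> \<le> W \<beta> (n \<beta> - i - 1) / (\<rho> \<beta> * W \<beta> (n \<beta> - i))
      \<and> W \<beta> (n \<beta> - i - 1) / (\<rho> \<beta> * W \<beta> (n \<beta> - i)) \<le> real (n \<beta> - i) / (\<rho> \<beta> * \<Lambda> \<beta>) / (1 - c \<beta>)"
  proof eventually_elim
    case (elim \<beta>)
    then have pos: "\<rho> \<beta> > 0" "\<Lambda> \<beta> > 0" "c \<beta> < 1" and m: "1 \<le> n \<beta> - i" "n \<beta> - i \<le> n \<beta>"
      unfolding recursion_bounds_def by auto
    from elim(1) m(2) have "W \<beta> (n \<beta> - i) > 0 \<and> (1 \<le> n \<beta> - i \<longrightarrow>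
         (1 - c \<beta>) * \<Lambda> \<beta> * W \<beta> (n \<beta> - i - 1) \<le> real (n \<beta> - i) * W \<beta> (n \<beta> - i) \<and>
         real (n \<beta> - i) * W \<beta> (n \<beta> - i)
           \<le> \<Lambda> \<beta> * W \<beta> (n \<beta> - i - 1) + \<Lambda> \<beta> * \<theta> \<beta> * \<rho> \<beta> * W \<beta> (n \<beta> - i))"
      unfolding recursion_bounds_def by blast
    then show ?case using step_ratio_bounds[OF pos] m(1) by blast
  qed
  then show "\<forall>\<^sub>F \<beta> in at_top. real (n \<beta> - i) / (\<rho> \<beta> * \<Lambda> \<beta>) - \<theta> \<beta> \<le> W \<beta> (n \<beta> - i - 1) / (\<rho> \<beta> * W \<beta> (n \<beta> - i))"
    "\<forall>\<^sub>F \<beta> in at_top. W \<beta> (n \<beta> - i - 1) / (\<rho> \<beta> * W \<beta> (n \<beta> - i)) \<le> real (n \<beta> - i) / (\<rho> \<beta> * \<Lambda> \<beta>) / (1 - c \<beta>)"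
    by (auto elim: eventually_mono)
  show "((\<lambda>\<beta>. real (n \<beta> - i) / (\<rho> \<beta> * \<Lambda> \<beta>) - \<theta> \<beta>) \<longlongrightarrow> 1) at_top"
    using tendsto_diff[OF density_shift[OF X_top dens] \<theta>_lim] by simp
  have "((\<lambda>\<beta>. 1 - c \<beta>) \<longlongrightarrow> 1 - 0) at_top" by (intro tendsto_intros c_lim)
  from tendsto_divide[OF density_shift[OF X_top dens, of i] this]
  show "((\<lambda>\<beta>. real (n \<beta> - i) / (\<rho> \<beta> * \<Lambda> \<beta>) / (1 - c \<beta>)) \<longlongrightarrow> 1) at_top" by simp
qed

lemma telescoped_ratio_tendsto:
  fixes W :: "real \<Rightarrow> nat \<Rightarrow> real" and n :: "real \<Rightarrow> nat" and \<rho> \<Lambda> c \<theta> :: "real \<Rightarrow> real"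
  assumes X_top: "filterlim (\<lambda>\<beta>. \<rho> \<beta> * \<Lambda> \<beta>) at_top at_top"
    and dens: "((\<lambda>\<beta>. real (n \<beta>) / (\<rho> \<beta> * \<Lambda> \<beta>)) \<longlongrightarrow> 1) at_top"
    and c_lim: "(c \<longlongrightarrow> 0) at_top" and \<theta>_lim: "(\<theta> \<longlongrightarrow> 0) at_top"
    and rec: "\<forall>\<^sub>F \<beta> in at_top. recursion_bounds (W \<beta>) (n \<beta>) (\<rho> \<beta>) (\<Lambda> \<beta>) (c \<beta>) (\<theta> \<beta>)"
  shows "((\<lambda>\<beta>. W \<beta> (n \<beta> - s) / (\<rho> \<beta> ^ s * W \<beta> (n \<beta>))) \<longlongrightarrow> 1) at_top"
proof -
  have "((\<lambda>\<beta>. \<Prod>i<s. W \<beta> (n \<beta> - i - 1) / (\<rho> \<beta> * W \<beta> (n \<beta> - i))) \<longlongrightarrow> (\<Prod>i<s. 1)) at_top"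
    by (rule tendsto_prod) (rule step_ratio_tendsto[OF assms])
  moreover have "\<forall>\<^sub>F \<beta> in at_top. real s \<le> real (n \<beta>)"
    using density_top[OF X_top dens] unfolding filterlim_at_top by blast
  with rec have "\<forall>\<^sub>F \<beta> in at_top.
      (\<Prod>i<s. W \<beta> (n \<beta> - i - 1) / (\<rho> \<beta> * W \<beta> (n \<beta> - i))) = W \<beta> (n \<beta> - s) / (\<rho> \<beta> ^ s * W \<beta> (n \<beta>))"
    by eventually_elim (rule prod_ratio_telescope, auto simp: recursion_bounds_def)
  ultimately show ?thesis by (simp add: tendsto_cong)
qed

lemma defect_ratio_bounds:
  fixes Z W e e' :: real
  assumes "W > 0" "Z \<le> W" "W - Z \<le> e * W" "e \<le> e'"
  shows "1 - e' \<le> Z / W \<and> Z / W \<le> 1"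
proof
  have "e * W \<le> e' * W" using assms by (intro mult_right_mono) auto
  then have "(1 - e') * W \<le> Z" using assms(3) by (simp add: left_diff_distrib)
  then show "1 - e' \<le> Z / W" using assms(1) by (simp add: pos_le_divide_eq)
  show "Z / W \<le> 1" using assms(1,2) by simp
qed

subsection \<open>The low-temperature, low-density regime\<close>

text \<open>\<open>theta \<rightarrow> 0\<close> because the energy gap \<open>eta\<close> is positive.\<close>

lemma theta_tendsto_0:
  assumes "U > 0" "U < \<Delta>" "\<Delta> < 2 * U"
  shows "((\<lambda>\<beta>. theta U \<Delta> \<beta>) \<longlongrightarrow> 0) at_top"
proof -
  have "filterlim (\<lambda>\<beta>. \<beta> * eta U \<Delta>) at_top at_top"
    using lc_ge_2_and_eta_pos[OF assms]
    by (intro filterlim_at_top_mult_tendsto_pos[OF tendsto_const]) (auto simp: filterlim_ident)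
  then have "((\<lambda>\<beta>. exp (- (\<beta> * eta U \<Delta>))) \<longlongrightarrow> 0) at_top"
    by (rule filterlim_compose[OF exp_at_bot filterlim_uminus_at_bot_at_top[THEN filterlim_compose]])
  from tendsto_mult[OF tendsto_const this, of "real (cluster_const U \<Delta>)"] show ?thesis
    unfolding theta_def by simp
qed

lemma nat_ceiling_bounds:
  fixes x :: real assumes "x \<ge> 0"
  shows "x \<le> real (nat \<lceil>x\<rceil>)" "real (nat \<lceil>x\<rceil>) \<le> x + 1"
  using assms ceiling_correct[of x] by linarith+

locale low_density_regime =
  fixes U \<Delta> :: real and N L :: "real \<Rightarrow> nat" and \<delta> :: "real \<Rightarrow> real"
  assumes U: "U > 0" "U < \<Delta>" "\<Delta> < 2 * U"
    and dens: "filterlim (\<lambda>\<beta>. real (card (torus (N \<beta>))) * exp (- \<beta> * \<Delta>)) at_top at_top"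
    and L_odd: "\<forall>\<beta>. odd (L \<beta>)"
    and L_sq: "\<forall>\<beta>. real (L \<beta>) ^ 2 = exp ((\<Delta> - \<delta> \<beta>) * \<beta>)"
    and \<delta>_lim: "(\<delta> \<longlongrightarrow> 0) at_top"
    and \<beta>\<delta>_lim: "filterlim (\<lambda>\<beta>. \<beta> * \<delta> \<beta>) at_top at_top"
begin

abbreviation rho :: "real \<Rightarrow> real" where "rho \<beta> \<equiv> exp (- \<beta> * \<Delta>)"
abbreviation vol :: "real \<Rightarrow> real" where "vol \<beta> \<equiv> real (N \<beta>) * real (N \<beta>)"
abbreviation npart :: "real \<Rightarrow> nat" where "npart \<beta> \<equiv> n_part \<Delta> (N \<beta>) \<beta>"

lemma expected_number_top: "filterlim (\<lambda>\<beta>. rho \<beta> * vol \<beta>) at_top at_top"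
  using dens by (simp add: card_torus mult.commute)

lemma npart_density: "((\<lambda>\<beta>. real (npart \<beta>) / (rho \<beta> * vol \<beta>)) \<longlongrightarrow> 1) at_top"
proof (rule tendsto_sandwich[of "\<lambda>_. 1" _ _ "\<lambda>\<beta>. 1 + inverse (rho \<beta> * vol \<beta>)"])
  have npart_eq: "npart \<beta> = nat \<lceil>rho \<beta> * vol \<beta>\<rceil>" for \<beta>
    unfolding n_part_def card_torus by simp
  have ev: "\<forall>\<^sub>F \<beta> in at_top. rho \<beta> * vol \<beta> \<ge> 1"
    using expected_number_top by (simp add: filterlim_at_top)
  show "\<forall>\<^sub>F \<beta> in at_top. 1 \<le> real (npart \<beta>) / (rho \<beta> * vol \<beta>)"
    using ev by eventually_elim (use nat_ceiling_bounds(1) in \<open>simp add: npart_eq\<close>)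
  show "\<forall>\<^sub>F \<beta> in at_top. real (npart \<beta>) / (rho \<beta> * vol \<beta>) \<le> 1 + inverse (rho \<beta> * vol \<beta>)"
    using ev by eventually_elim
      (use nat_ceiling_bounds(2)[of "rho _ * vol _"] in \<open>simp add: npart_eq field_simps\<close>)
  show "((\<lambda>\<beta>. 1 + inverse (rho \<beta> * vol \<beta>)) \<longlongrightarrow> 1) at_top"
    using tendsto_add[OF tendsto_const tendsto_inverse_0_at_top[OF expected_number_top]] by simp
qed simp

lemma box_area_top: "filterlim (\<lambda>\<beta>. real (L \<beta>) ^ 2) at_top at_top"
proof -
  have "filterlim (\<lambda>\<beta>. (\<Delta> - \<delta> \<beta>) * \<beta>) at_top at_top"
    by (rule filterlim_tendsto_pos_mult_at_top[OF tendsto_diff[OF tendsto_const \<delta>_lim]])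
       (use U in \<open>simp_all add: filterlim_ident\<close>)
  then show ?thesis using L_sq filterlim_compose[OF exp_at_top] by simp
qed

lemma rho_box_area: "((\<lambda>\<beta>. rho \<beta> * real (L \<beta>) ^ 2) \<longlongrightarrow> 0) at_top"
proof -
  have "rho \<beta> * real (L \<beta>) ^ 2 = exp (- (\<beta> * \<delta> \<beta>))" for \<beta>
    using L_sq by (simp add: exp_add[symmetric] algebra_simps)
  moreover have "((\<lambda>\<beta>. exp (- (\<beta> * \<delta> \<beta>))) \<longlongrightarrow> 0) at_top"
    by (rule filterlim_compose[OF exp_at_bot filterlim_uminus_at_bot_at_top[THEN filterlim_compose, OF \<beta>\<delta>_lim]])
  ultimately show ?thesis by simp
qed

definition lower_error :: "real \<Rightarrow> real" where
  "lower_error \<beta> = 4 * real (npart \<beta>) * real (L \<beta>) ^ 2 / vol \<beta>"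

lemma lower_error_tendsto_0: "(lower_error \<longlongrightarrow> 0) at_top"
proof -
  have "\<forall>\<^sub>F \<beta> in at_top. 4 * (real (npart \<beta>) / (rho \<beta> * vol \<beta>)) * (rho \<beta> * real (L \<beta>) ^ 2) = lower_error \<beta>"
    using expected_number_top unfolding filterlim_at_top_dense
    by (auto elim!: eventually_mono[OF spec[of _ 0]] simp: lower_error_def field_simps)
  moreover have "((\<lambda>\<beta>. 4 * (real (npart \<beta>) / (rho \<beta> * vol \<beta>)) * (rho \<beta> * real (L \<beta>) ^ 2)) \<longlongrightarrow> 4 * 1 * 0) at_top"
    by (intro tendsto_intros npart_density rho_box_area)
  ultimately show ?thesis using Lim_transform_eventually by fastforce
qed


lemma eventually_torus_large: "\<forall>\<^sub>F \<beta> in at_top. kmax U \<Delta> < N \<beta>"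
proof -
  let ?k = "kmax U \<Delta>"
  have "filterlim vol at_top at_top"
  proof (rule filterlim_at_top_mono[OF expected_number_top])
    show "\<forall>\<^sub>F \<beta> in at_top. rho \<beta> * vol \<beta> \<le> vol \<beta>"
      using eventually_ge_at_top[of 0] by eventually_elim (use U in \<open>simp add: mult_left_le_one_le\<close>)
  qed
  then have "\<forall>\<^sub>F \<beta> in at_top. real (?k * ?k) + 1 \<le> vol \<beta>"
    unfolding filterlim_at_top by blast
  then show ?thesis
  proof eventually_elim
    case (elim \<beta>)
    show ?case
    proof (rule ccontr)
      assume "\<not> ?k < N \<beta>"
      then have "N \<beta> * N \<beta> \<le> ?k * ?k" by (simp add: mult_le_mono)
      then have "vol \<beta> \<le> real (?k * ?k)" by (metis of_nat_le_iff of_nat_mult)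
      then show False using elim by simp
    qed
  qed
qed

lemma eventually_box_large: "\<forall>\<^sub>F \<beta> in at_top. int (kmax U \<Delta>) + 1 \<le> (int (L \<beta>) - 1) div 2"
proof -
  let ?k = "kmax U \<Delta>"
  have "\<forall>\<^sub>F \<beta> in at_top. real ((2 * ?k + 3)^2) \<le> real (L \<beta>) ^ 2"
    using box_area_top unfolding filterlim_at_top by blast
  then show ?thesis
  proof eventually_elim
    case (elim \<beta>)
    then have "(2 * ?k + 3)^2 \<le> L \<beta> ^ 2" by (metis of_nat_le_iff of_nat_power)
    then have "2 * ?k + 3 \<le> L \<beta>" using power2_le_imp_le by blast
    then show ?case by linarith
  qed
qed

lemma eventually_dilute_regime:
  "\<forall>\<^sub>F \<beta> in at_top. dilute_regime U \<Delta> (N \<beta>) (L \<beta>) (npart \<beta>) \<beta> \<and> lower_error \<beta> \<le> 1 / 2"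
proof -
  have X1: "\<forall>\<^sub>F \<beta> in at_top. rho \<beta> * vol \<beta> \<ge> 1"
    using expected_number_top by (simp add: filterlim_at_top)
  have small: "\<forall>\<^sub>F \<beta> in at_top. lower_error \<beta> \<le> 1 / 2"
    using order_tendstoD(2)[OF lower_error_tendsto_0, of "1/2"] by (auto elim: eventually_mono)
  show ?thesis
    using eventually_ge_at_top[of 0] eventually_torus_large eventually_box_large X1 small
  proof eventually_elim
    case (elim \<beta>)
    then have vol_pos: "vol \<beta> > 0" by simp
    have "real (npart \<beta>) \<le> rho \<beta> * vol \<beta> + 1"
      using nat_ceiling_bounds(2)[of "rho \<beta> * vol \<beta>"] unfolding n_part_def card_torus by simp
    then have "real (npart \<beta>) \<le> 2 * rho \<beta> * vol \<beta>" using elim by simp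
    moreover have "8 * real (npart \<beta>) * real (L \<beta>) ^ 2 \<le> vol \<beta>"
      using elim(5) vol_pos unfolding lower_error_def by (simp add: field_simps)
    ultimately show ?case
      using elim U L_odd unfolding dilute_regime_def by (simp add: mult.assoc)
  qed
qed

lemma ZS_shift_ratio:
  "((\<lambda>\<beta>. ZS U \<Delta> (N \<beta>) (L \<beta>) \<beta> (npart \<beta> - s) / (rho \<beta> ^ s * ZS U \<Delta> (N \<beta>) (L \<beta>) \<beta> (npart \<beta>)))
     \<longlongrightarrow> 1) at_top"
proof (rule telescoped_ratio_tendsto[OF expected_number_top npart_density lower_error_tendsto_0
      theta_tendsto_0[OF U]])
  show "\<forall>\<^sub>F \<beta> in at_top. recursion_bounds (ZS U \<Delta> (N \<beta>) (L \<beta>) \<beta>) (npart \<beta>) (rho \<beta>) (vol \<beta>)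
      (lower_error \<beta>) (theta U \<Delta> \<beta>)"
    using eventually_dilute_regime
  proof eventually_elim
    case (elim \<beta>)
    then interpret dilute_regime U \<Delta> "N \<beta>" "L \<beta>" "npart \<beta>" \<beta> by simp
    have "(1 - lower_error \<beta>) * vol \<beta> = vol \<beta> - 4 * real (npart \<beta>) * real (L \<beta>) ^ 2"
      using N unfolding lower_error_def by (simp add: field_simps)
    then show ?case unfolding recursion_bounds_def
      using N elim ZS_pos ZS_upper_recursion ZS_ratio_lower[OF less_imp_le[OF U(1)] \<beta> N L]
      by simp
  qed
qed

lemma box_error_le:
  assumes "m \<le> npart \<beta>" "N \<beta> > 0"
  shows "real (L \<beta>) ^ 2 * (2 * real m / vol \<beta> + theta U \<Delta> \<beta> * rho \<beta>)
    \<le> rho \<beta> * real (L \<beta>) ^ 2 * (2 * (real (npart \<beta>) / (rho \<beta> * vol \<beta>)) + theta U \<Delta> \<beta>)"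
proof -
  have "2 * real m / vol \<beta> \<le> rho \<beta> * (2 * (real (npart \<beta>) / (rho \<beta> * vol \<beta>)))"
    using assms by (simp add: divide_right_mono)
  then have "real (L \<beta>) ^ 2 * (2 * real m / vol \<beta> + theta U \<Delta> \<beta> * rho \<beta>)
      \<le> real (L \<beta>) ^ 2 * (rho \<beta> * (2 * (real (npart \<beta>) / (rho \<beta> * vol \<beta>))) + theta U \<Delta> \<beta> * rho \<beta>)"
    by (intro mult_left_mono add_right_mono) simp_all
  then show ?thesis by (simp add: algebra_simps)
qed

lemma Zcheck_ZS_ratio:
  "((\<lambda>\<beta>. Zcheck U \<Delta> (N \<beta>) (L \<beta>) \<beta> (npart \<beta> - s) / ZS U \<Delta> (N \<beta>) (L \<beta>) \<beta> (npart \<beta> - s))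
     \<longlongrightarrow> 1) at_top"
proof (rule tendsto_sandwich[of
    "\<lambda>\<beta>. 1 - rho \<beta> * real (L \<beta>) ^ 2 * (2 * (real (npart \<beta>) / (rho \<beta> * vol \<beta>)) + theta U \<Delta> \<beta>)"
    _ _ "\<lambda>_. 1"])
  let ?m = "\<lambda>\<beta>. npart \<beta> - s"
  have "\<forall>\<^sub>F \<beta> in at_top. real (s + 1) \<le> real (npart \<beta>)"
    using density_top[OF expected_number_top npart_density] unfolding filterlim_at_top by blast
  with eventually_dilute_regime
  have "\<forall>\<^sub>F \<beta> in at_top.
      1 - rho \<beta> * real (L \<beta>) ^ 2 * (2 * (real (npart \<beta>) / (rho \<beta> * vol \<beta>)) + theta U \<Delta> \<beta>)
        \<le> Zcheck U \<Delta> (N \<beta>) (L \<beta>) \<beta> (?m \<beta>) / ZS U \<Delta> (N \<beta>) (L \<beta>) \<beta> (?m \<beta>)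
      \<and> Zcheck U \<Delta> (N \<beta>) (L \<beta>) \<beta> (?m \<beta>) / ZS U \<Delta> (N \<beta>) (L \<beta>) \<beta> (?m \<beta>) \<le> 1"
  proof eventually_elim
    case (elim \<beta>)
    then interpret dilute_regime U \<Delta> "N \<beta>" "L \<beta>" "npart \<beta>" \<beta> by simp
    let ?Z = "ZS U \<Delta> (N \<beta>) (L \<beta>) \<beta> (?m \<beta>)"
    have Zpos: "?Z > 0" by (rule ZS_pos) simp
    have m: "1 \<le> ?m \<beta>" "?m \<beta> \<le> npart \<beta>" using elim by auto
    have err: "real (L \<beta>) ^ 2 * (2 * real (?m \<beta>) / vol \<beta> + theta U \<Delta> \<beta> * rho \<beta>)
        \<le> rho \<beta> * real (L \<beta>) ^ 2 * (2 * (real (npart \<beta>) / (rho \<beta> * vol \<beta>)) + theta U \<Delta> \<beta>)"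
      using m(2) N by (rule box_error_le)
    show ?case by (rule defect_ratio_bounds[OF Zpos Zcheck_le_ZS ZS_minus_Zcheck[OF m] err])
  qed
  then show "\<forall>\<^sub>F \<beta> in at_top. 1 - rho \<beta> * real (L \<beta>) ^ 2 * (2 * (real (npart \<beta>) / (rho \<beta> * vol \<beta>))
        + theta U \<Delta> \<beta>) \<le> Zcheck U \<Delta> (N \<beta>) (L \<beta>) \<beta> (?m \<beta>) / ZS U \<Delta> (N \<beta>) (L \<beta>) \<beta> (?m \<beta>)"
    "\<forall>\<^sub>F \<beta> in at_top. Zcheck U \<Delta> (N \<beta>) (L \<beta>) \<beta> (?m \<beta>) / ZS U \<Delta> (N \<beta>) (L \<beta>) \<beta> (?m \<beta>) \<le> 1"
    by (auto elim: eventually_mono)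
  show "((\<lambda>\<beta>. 1 - rho \<beta> * real (L \<beta>) ^ 2 * (2 * (real (npart \<beta>) / (rho \<beta> * vol \<beta>))
      + theta U \<Delta> \<beta>)) \<longlongrightarrow> 1) at_top"
  proof -
    have "((\<lambda>\<beta>. rho \<beta> * real (L \<beta>) ^ 2 * (2 * (real (npart \<beta>) / (rho \<beta> * vol \<beta>)) + theta U \<Delta> \<beta>))
        \<longlongrightarrow> 0 * (2 * 1 + 0)) at_top"
      by (intro tendsto_intros rho_box_area npart_density theta_tendsto_0[OF U])
    from tendsto_diff[OF tendsto_const this] show ?thesis by simp
  qed
qed simp


lemma Zcheck_shift_ratio:
  "((\<lambda>\<beta>. Zcheck U \<Delta> (N \<beta>) (L \<beta>) \<beta> (npart \<beta> - s) / (rho \<beta> ^ s * ZS U \<Delta> (N \<beta>) (L \<beta>) \<beta> (npart \<beta>)))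
     \<longlongrightarrow> 1) at_top"
proof -
  have ev: "\<forall>\<^sub>F \<beta> in at_top.
      Zcheck U \<Delta> (N \<beta>) (L \<beta>) \<beta> (npart \<beta> - s) / ZS U \<Delta> (N \<beta>) (L \<beta>) \<beta> (npart \<beta> - s)
      * (ZS U \<Delta> (N \<beta>) (L \<beta>) \<beta> (npart \<beta> - s) / (rho \<beta> ^ s * ZS U \<Delta> (N \<beta>) (L \<beta>) \<beta> (npart \<beta>)))
      = Zcheck U \<Delta> (N \<beta>) (L \<beta>) \<beta> (npart \<beta> - s) / (rho \<beta> ^ s * ZS U \<Delta> (N \<beta>) (L \<beta>) \<beta> (npart \<beta>))"
    using eventually_dilute_regime
  proof eventually_elim
    case (elim \<beta>)
    then have "ZS U \<Delta> (N \<beta>) (L \<beta>) \<beta> (npart \<beta> - s) > 0" "ZS U \<Delta> (N \<beta>) (L \<beta>) \<beta> (npart \<beta>) > 0"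
      using dilute_regime.ZS_pos by auto
    then show ?case by simp
  qed
  have "((\<lambda>\<beta>. Zcheck U \<Delta> (N \<beta>) (L \<beta>) \<beta> (npart \<beta> - s) / ZS U \<Delta> (N \<beta>) (L \<beta>) \<beta> (npart \<beta> - s)
      * (ZS U \<Delta> (N \<beta>) (L \<beta>) \<beta> (npart \<beta> - s) / (rho \<beta> ^ s * ZS U \<Delta> (N \<beta>) (L \<beta>) \<beta> (npart \<beta>))))
      \<longlongrightarrow> 1 * 1) at_top"
    by (rule tendsto_mult[OF Zcheck_ZS_ratio ZS_shift_ratio])
  then show ?thesis using Lim_transform_eventually[OF _ ev] by simp
qed

end

lemma mu_can_Sset: "mu_can U N \<beta> n (Sset U \<Delta> N L n) = ZS U \<Delta> N L \<beta> n / Zcan U N \<beta> n"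
proof -
  have "Sset U \<Delta> N L n \<inter> configs N n = Sset U \<Delta> N L n" unfolding Sset_def by blast
  then show ?thesis unfolding mu_can_def ZS_def weight_def by simp
qed

theorem lemmaB1:
  fixes U \<Delta> :: real and N L :: "real \<Rightarrow> nat" and \<delta> :: "real \<Rightarrow> real" and s :: nat
  assumes U_pos: "U > 0" and "U < \<Delta>" and "\<Delta> < 2 * U"
    and not_nat: "U / (2 * U - \<Delta>) \<notin> \<nat>"
    and N_odd: "\<forall>\<beta>. odd (N \<beta>)"
    and dens: "filterlim (\<lambda>\<beta>. real (card (torus (N \<beta>))) * exp (- \<beta> * \<Delta>)) at_top at_top"
    and gam: "((\<lambda>\<beta>. real (card (torus (N \<beta>))) * exp (- \<beta> * Gamma_crit U \<Delta>)) \<longlongrightarrow> 0) at_top"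
    and L_odd: "\<forall>\<beta>. odd (L \<beta>)"
    and L_sq: "\<forall>\<beta>. real (L \<beta>) ^ 2 = exp ((\<Delta> - \<delta> \<beta>) * \<beta>)"
    and \<delta>_lim: "(\<delta> \<longlongrightarrow> 0) at_top"
    and \<beta>\<delta>_lim: "filterlim (\<lambda>\<beta>. \<beta> * \<delta> \<beta>) at_top at_top"
  shows "\<exists>\<epsilon> :: real \<Rightarrow> real. (\<epsilon> \<longlongrightarrow> 0) at_top \<and>
    (\<forall>\<^sub>F \<beta> in at_top.
       Zcheck U \<Delta> (N \<beta>) (L \<beta>) \<beta> (n_part \<Delta> (N \<beta>) \<beta> - s)
         / Zcan U (N \<beta>) \<beta> (n_part \<Delta> (N \<beta>) \<beta>)
       = exp (- \<beta> * \<Delta>) ^ s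
         * mu_can U (N \<beta>) \<beta> (n_part \<Delta> (N \<beta>) \<beta>)
             (Sset U \<Delta> (N \<beta>) (L \<beta>) (n_part \<Delta> (N \<beta>) \<beta>))
         * (1 + \<epsilon> \<beta>))"
proof -
  interpret low_density_regime U \<Delta> N L \<delta>
    by unfold_locales (use assms in auto)
  define \<epsilon> where "\<epsilon> \<beta> = Zcheck U \<Delta> (N \<beta>) (L \<beta>) \<beta> (npart \<beta> - s)
      / (rho \<beta> ^ s * ZS U \<Delta> (N \<beta>) (L \<beta>) \<beta> (npart \<beta>)) - 1" for \<beta>
  have "(\<epsilon> \<longlongrightarrow> 0) at_top"
    using tendsto_diff[OF Zcheck_shift_ratio[of s] tendsto_const[of 1]] unfolding \<epsilon>_def by simp
  moreover have "\<forall>\<^sub>F \<beta> in at_top. Zcheck U \<Delta> (N \<beta>) (L \<beta>) \<beta> (npart \<beta> - s) / Zcan U (N \<beta>) \<beta> (npart \<beta>)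
      = rho \<beta> ^ s * mu_can U (N \<beta>) \<beta> (npart \<beta>) (Sset U \<Delta> (N \<beta>) (L \<beta>) (npart \<beta>)) * (1 + \<epsilon> \<beta>)"
    using eventually_dilute_regime
  proof eventually_elim
    case (elim \<beta>)
    then have "ZS U \<Delta> (N \<beta>) (L \<beta>) \<beta> (npart \<beta>) > 0" using dilute_regime.ZS_pos by blast
    then show ?case unfolding mu_can_Sset \<epsilon>_def
      by (cases "Zcan U (N \<beta>) \<beta> (npart \<beta>) = 0") (simp_all add: field_simps)
  qed
  ultimately show ?thesis by blast
qed

end
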